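(* Let $\lambda=(\lambda_1,\lambda_2,\lambda_3)\in\mathbb{C}^3$ and $s=(s_1,s_2,s_3)\in\mathbb{R}^3$. There exists $\Delta\in\mathcal{M}_3(\mathbb{R})$ with $\mathrm{spec}(\Delta)=\{\lambda_1,\lambda_2,\lambda_3\}$ (as a multiset) and $O_1\Delta O_2=\mathrm{diag}(s_1,s_2,s_3)$ for some $O_1,O_2\in SO(3)$ if and only if all of the following hold: (1) the multiset $\{\lambda_1,\lambda_2,\lambda_3\}$ is invariant under complex conjugation (i.e. either all $\lambda_i$ are real, or one is real and the other two form a complex conjugate pair); (2) $s_1s_2s_3=\lambda_1\lambda_2\lambda_3$; (3) $|s_1^\downarrow s_2^\downarrow|\ge|\lambda_1^\downarrow\lambda_2^\downarrow|$ and $|s_1^\downarrow|\ge|\lambda_1^\downarrow|$, where $s^\downarrow$ and $\lambda^\downarrow$ denote reorderings with $|s_1^\downarrow|\ge|s_2^\downarrow|\ge|s_3^\downarrow|$ and $|\lambda_1^\downarrow|\ge|\lambda_2^\downarrow|\ge|\lambda_3^\downarrow|$.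
   Context: $SO(3)$ is the group of real $3\times 3$ orthogonal matrices with determinant $1$; $\mathrm{spec}(\Delta)$ is the multiset of eigenvalues of $\Delta$ counted with algebraic multiplicity. *)

theory Defs
  imports "Jordan_Normal_Form.Determinant" "Jordan_Normal_Form.Char_Poly"
    "HOL-Combinatorics.Permutations"
begin

definition SO3 :: "real mat set" where
  "SO3 = {Q. Q \<in> carrier_mat 3 3 \<and> transpose_mat Q * Q = 1\<^sub>m 3 \<and> det Q = 1}"

definition desc_reordering :: "(nat \<Rightarrow> real) \<Rightarrow> (nat \<Rightarrow> nat) \<Rightarrow> bool" where
  "desc_reordering a \<sigma> \<longleftrightarrow> \<sigma> permutes {0,1,2} \<and> a (\<sigma> 0) \<ge> a (\<sigma> 1) \<and> a (\<sigma> 1) \<ge> a (\<sigma> 2)"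

end

theory Submission
  imports Defs
begin

(* For D = diag(s) the condition "O1 * Delta * O2 = D with O1, O2 in SO(3)" says exactly that
   Delta is similar (by a rotation) to D * W for the rotation W = O2^T O1^T.  The spectrum of
   D * W is governed by three invariants: det = s0 s1 s2, trace = sum s_i W_ii and the sum of
   principal 2x2 minors = sum s_j s_k W_ii (a rotation equals its own cofactor matrix).  The
   diagonals of rotations form the tetrahedron T with vertices (1,1,1), (1,-1,-1), (-1,1,-1),
   (-1,-1,1) (one inclusion from 1 + trace >= 0, the other by the quaternion parametrisation).
   Hence the theorem reduces to describing the image of T under the linear map
   q |-> (sum s_i q_i, sum s_j s_k q_i).  For sorted a >= b >= |c| this image is the polygon cut
   out by six explicit inequalities, and, given the real elementary symmetric functions of the
   lambda_i, these inequalities are equivalent to the Weyl-type bounds on |lambda|; the real case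
   and the case of a complex-conjugate pair are treated separately.  A symmetry argument removes
   the sorting assumption, and the final theorem only translates multisets and descending
   reorderings into these terms. *)


section \<open>Determinants and characteristic polynomials of 3x3 matrices\<close>

lemma det_2x2:
  assumes A: "(A :: 'a :: comm_ring_1 mat) \<in> carrier_mat 2 2"
  shows "det A = A$$(0,0) * A$$(1,1) - A$$(0,1) * A$$(1,0)"
proof -
  have "det A = (\<Sum>j<2. A $$ (0,j) * cofactor A 0 j)" by (rule laplace_expansion_row[OF A], simp)
  also have "\<dots> = A$$(0,0) * cofactor A 0 0 + A$$(0,1) * cofactor A 0 1" by (simp add: numeral_2_eq_2)
  also have "cofactor A 0 0 = A$$(1,1)" unfolding cofactor_def
    by (subst det_single, insert A, auto simp: mat_delete_def numeral_2_eq_2)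
  also have "cofactor A 0 1 = - A$$(1,0)" unfolding cofactor_def
    by (subst det_single, insert A, auto simp: mat_delete_def numeral_2_eq_2)
  finally show ?thesis by (simp add: algebra_simps)
qed

lemma det_3x3:
  assumes A: "(A :: 'a :: comm_ring_1 mat) \<in> carrier_mat 3 3"
  shows "det A = A$$(0,0) * A$$(1,1) * A$$(2,2) - A$$(0,0) * A$$(1,2) * A$$(2,1)
     - A$$(0,1) * A$$(1,0) * A$$(2,2) + A$$(0,1) * A$$(1,2) * A$$(2,0)
     + A$$(0,2) * A$$(1,0) * A$$(2,1) - A$$(0,2) * A$$(1,1) * A$$(2,0)"
proof -
  have "det A = (\<Sum>j<3. A $$ (0,j) * cofactor A 0 j)" by (rule laplace_expansion_row[OF A], simp)
  also have "\<dots> = A$$(0,0) * cofactor A 0 0 + A$$(0,1) * cofactor A 0 1 + A$$(0,2) * cofactor A 0 2"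
    by (simp add: numeral_3_eq_3 numeral_2_eq_2)
  also have "cofactor A 0 0 = A$$(1,1) * A$$(2,2) - A$$(1,2) * A$$(2,1)" unfolding cofactor_def
    by (subst det_2x2, insert A, auto simp: mat_delete_def numeral_2_eq_2)
  also have "cofactor A 0 1 = - (A$$(1,0) * A$$(2,2) - A$$(1,2) * A$$(2,0))" unfolding cofactor_def
    by (subst det_2x2, insert A, auto simp: mat_delete_def numeral_2_eq_2)
  also have "cofactor A 0 2 = A$$(1,0) * A$$(2,1) - A$$(1,1) * A$$(2,0)" unfolding cofactor_def
    by (subst det_2x2, insert A, auto simp: mat_delete_def numeral_2_eq_2)
  finally show ?thesis by (simp add: algebra_simps)
qed

lemma mult_3x3:
  assumes "A \<in> carrier_mat 3 3" "B \<in> carrier_mat 3 3" "i < 3" "j < 3"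
  shows "(A*B)$$(i,j) = A$$(i,0)*B$$(0,j) + A$$(i,1)*B$$(1,j) + A$$(i,2)*B$$(2,j)"
  using assms by (simp add: scalar_prod_def numeral_3_eq_3 numeral_2_eq_2)

text \<open>The two non-obvious coefficients of a 3x3 characteristic polynomial.\<close>

definition trace3 :: "real mat \<Rightarrow> real" where
  "trace3 X = X$$(0,0) + X$$(1,1) + X$$(2,2)"

definition minors3 :: "real mat \<Rightarrow> real" where
  "minors3 X = X$$(0,0)*X$$(1,1) - X$$(0,1)*X$$(1,0) + X$$(0,0)*X$$(2,2) - X$$(0,2)*X$$(2,0)
     + X$$(1,1)*X$$(2,2) - X$$(1,2)*X$$(2,1)"

lemma char_poly_3x3:
  assumes A: "(A :: 'a :: {idom,ring_char_0} mat) \<in> carrier_mat 3 3"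
  shows "char_poly A = [: - det A, A$$(0,0)*A$$(1,1) - A$$(0,1)*A$$(1,0) + A$$(0,0)*A$$(2,2) - A$$(0,2)*A$$(2,0)
     + A$$(1,1)*A$$(2,2) - A$$(1,2)*A$$(2,1), - (A$$(0,0) + A$$(1,1) + A$$(2,2)), 1:]"
proof -
  have C: "char_poly_matrix A \<in> carrier_mat 3 3" using A by simp
  show ?thesis
    unfolding char_poly_def det_3x3[OF C] det_3x3[OF A]
    using A by (auto simp: char_poly_matrix_def poly_eq_poly_eq_iff[symmetric] algebra_simps)
qed

lemma char_poly_real_3x3:
  assumes X: "X \<in> carrier_mat 3 3"
  shows "char_poly (map_mat complex_of_real X)
     = [: - of_real (det X), of_real (minors3 X), - of_real (trace3 X), 1:]"
proof -
  have Xc: "map_mat complex_of_real X \<in> carrier_mat 3 3" using X by simp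
  have "det (map_mat complex_of_real X) = of_real (det X)"
    unfolding det_3x3[OF Xc] det_3x3[OF X] using X by simp
  thus ?thesis unfolding char_poly_3x3[OF Xc] minors3_def trace3_def using X by simp
qed

lemma prod_linear_factors_3:
  fixes l :: "nat \<Rightarrow> complex"
  shows "(\<Prod>i<3. [:- l i, 1:]) = [: -(l 0*l 1*l 2), l 0*l 1+l 0*l 2+l 1*l 2, -(l 0+l 1+l 2), 1:]"
proof -
  have "(\<Prod>i<3. [:- l i, 1:]) = [:- l 0, 1:] * [:- l 1, 1:] * [:- l 2, 1:]"
    by (simp add: numeral_3_eq_3 numeral_2_eq_2 lessThan_Suc ac_simps)
  also have "\<dots> = [: -(l 0*l 1*l 2), l 0*l 1+l 0*l 2+l 1*l 2, -(l 0+l 1+l 2), 1:]"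
    by (simp add: poly_eq_poly_eq_iff[symmetric] algebra_simps)
  finally show ?thesis .
qed

lemma char_poly_eq_iff_invariants:
  fixes l :: "nat \<Rightarrow> complex"
  assumes X: "X \<in> carrier_mat 3 3"
  shows "char_poly (map_mat complex_of_real X) = (\<Prod>i<3. [:- l i, 1:]) \<longleftrightarrow>
    (of_real (det X) = l 0*l 1*l 2 \<and> of_real (minors3 X) = l 0*l 1+l 0*l 2+l 1*l 2
     \<and> of_real (trace3 X) = l 0+l 1+l 2)"
  unfolding char_poly_real_3x3[OF X] prod_linear_factors_3
  by (simp only: pCons_eq_iff neg_equal_iff_equal) simp


section \<open>Rotations and their diagonals\<close>

text \<open>The closed tetrahedron with vertices (1,1,1), (1,-1,-1), (-1,1,-1), (-1,-1,1); it will turn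
  out to be exactly the set of diagonals of rotations.\<close>

definition tetra :: "real \<Rightarrow> real \<Rightarrow> real \<Rightarrow> bool" where
  "tetra q0 q1 q2 \<longleftrightarrow> 0 \<le> 1+q0+q1+q2 \<and> 0 \<le> 1+q0-q1-q2 \<and> 0 \<le> 1-q0+q1-q2 \<and> 0 \<le> 1-q0-q1+q2"

text \<open>A 3x3 real matrix with orthonormal columns and determinant 1: each column is the cross
  product of the other two, i.e. the matrix equals its cofactor matrix.  The proof writes the
  squared distance to the cross product as a combination of the defining equations.\<close>

lemma rotation_cross_product:
  fixes a b c d e f g h k :: real
  assumes n0: "a^2 + d^2 + g^2 = 1" and n1: "b^2 + e^2 + h^2 = 1" and n2: "c^2 + f^2 + k^2 = 1"
    and o01: "a*b + d*e + g*h = 0"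
    and d: "a*e*k - a*f*h - b*d*k + b*f*g + c*d*h - c*e*g = 1"
  shows "k = a*e - b*d" "f = g*b - a*h" "c = d*h - g*e"
proof -
  have "(c - (d*h - g*e))^2 + (f - (g*b - a*h))^2 + (k - (a*e - b*d))^2
     = (c^2 + f^2 + k^2) - 2 * (a*e*k - a*f*h - b*d*k + b*f*g + c*d*h - c*e*g)
       + ((a^2 + d^2 + g^2) * (b^2 + e^2 + h^2) - (a*b + d*e + g*h)^2)"
    by (simp add: algebra_simps power2_eq_square)
  also have "\<dots> = 0" using n0 n1 n2 o01 d by simp
  finally have "(c - (d*h - g*e))^2 + (f - (g*b - a*h))^2 + (k - (a*e - b*d))^2 = 0" .
  hence "(c - (d*h - g*e))^2 = 0" "(f - (g*b - a*h))^2 = 0" "(k - (a*e - b*d))^2 = 0"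
    by (smt (verit) zero_le_power2)+
  thus "k = a*e - b*d" "f = g*b - a*h" "c = d*h - g*e" by auto
qed

text \<open>For such a matrix each diagonal entry equals its complementary principal minor, and the
  trace is at least -1: indeed (1 + tr)(3 - tr) is a sum of squares of the antisymmetric part.\<close>

lemma rotation_diagonal_facts:
  fixes a b c d e f g h k :: real
  assumes n0: "a^2 + d^2 + g^2 = 1" and n1: "b^2 + e^2 + h^2 = 1" and n2: "c^2 + f^2 + k^2 = 1"
    and o01: "a*b + d*e + g*h = 0" and o02: "a*c + d*f + g*k = 0"
    and o12: "b*c + e*f + h*k = 0"
    and d: "a*e*k - a*f*h - b*d*k + b*f*g + c*d*h - c*e*g = 1"
  shows "k = a*e - b*d" "e = a*k - c*g" "a = e*k - f*h" "1 + a + e + k \<ge> 0"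
proof -
  show c2: "k = a*e - b*d" using rotation_cross_product[OF n0 n1 n2 o01 d] by auto
  have "e = k*a - c*g"
    by (rule rotation_cross_product(2)[where a=c and b=a and c=b and d=f and e=d and f=e and g=k
          and h=g and k=h]) (insert assms, auto simp: algebra_simps)
  thus c1: "e = a*k - c*g" by (simp add: algebra_simps)
  have "a = e*k - h*f"
    by (rule rotation_cross_product(3)[where a=b and b=c and c=a and d=e and e=f and f=d and g=h
          and h=k and k=g]) (insert assms, auto simp: algebra_simps)
  thus c0: "a = e*k - f*h" by (simp add: algebra_simps)
  define t where "t = a + e + k"
  have "(1+t)*(3-t) = (b - d)^2 + (c - g)^2 + (f - h)^2"
  proof -
    have "(b - d)^2 + (c - g)^2 + (f - h)^2 = (a^2+d^2+g^2) + (b^2+e^2+h^2) + (c^2+f^2+k^2)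
        - (a^2+e^2+k^2) - 2*(b*d) - 2*(c*g) - 2*(f*h)"
      by (simp add: power2_diff)
    moreover have "b*d = a*e - k" "c*g = a*k - e" "f*h = e*k - a" using c0 c1 c2 by linarith+
    ultimately show ?thesis unfolding n0 n1 n2 t_def by (simp add: power2_eq_square algebra_simps)
  qed
  hence nn: "(1+t)*(3-t) \<ge> 0" by simp
  have "a^2 \<le> 1" "e^2 \<le> 1" "k^2 \<le> 1"
    using n0 n1 n2 zero_le_power2[of b] zero_le_power2[of c] zero_le_power2[of d]
      zero_le_power2[of f] zero_le_power2[of g] zero_le_power2[of h] by linarith+
  hence "t \<le> 3" unfolding t_def by (simp add: abs_square_le_1)
  with nn show "1 + a + e + k \<ge> 0" unfolding t_def by (smt (verit) mult_neg_pos)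
qed

lemma SO3_entries:
  assumes R: "R \<in> SO3"
  shows "R$$(0,0)^2 + R$$(1,0)^2 + R$$(2,0)^2 = 1" "R$$(0,1)^2 + R$$(1,1)^2 + R$$(2,1)^2 = 1"
    "R$$(0,2)^2 + R$$(1,2)^2 + R$$(2,2)^2 = 1"
    "R$$(0,0)*R$$(0,1) + R$$(1,0)*R$$(1,1) + R$$(2,0)*R$$(2,1) = 0"
    "R$$(0,0)*R$$(0,2) + R$$(1,0)*R$$(1,2) + R$$(2,0)*R$$(2,2) = 0"
    "R$$(0,1)*R$$(0,2) + R$$(1,1)*R$$(1,2) + R$$(2,1)*R$$(2,2) = 0"
    "R$$(0,0)*R$$(1,1)*R$$(2,2) - R$$(0,0)*R$$(1,2)*R$$(2,1) - R$$(0,1)*R$$(1,0)*R$$(2,2)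
      + R$$(0,1)*R$$(1,2)*R$$(2,0) + R$$(0,2)*R$$(1,0)*R$$(2,1) - R$$(0,2)*R$$(1,1)*R$$(2,0) = 1"
proof -
  have C: "R \<in> carrier_mat 3 3" and O: "transpose_mat R * R = 1\<^sub>m 3" and D: "det R = 1"
    using R unfolding SO3_def by auto
  have CT: "transpose_mat R \<in> carrier_mat 3 3" using C by simp
  have e: "R$$(0,i)*R$$(0,j) + R$$(1,i)*R$$(1,j) + R$$(2,i)*R$$(2,j) = (if i = j then 1 else 0)"
    if "i < 3" "j < 3" for i j
    using mult_3x3[OF CT C that] that C O by simp
  show "R$$(0,0)^2 + R$$(1,0)^2 + R$$(2,0)^2 = 1" "R$$(0,1)^2 + R$$(1,1)^2 + R$$(2,1)^2 = 1"
    "R$$(0,2)^2 + R$$(1,2)^2 + R$$(2,2)^2 = 1"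
    using e[of 0 0] e[of 1 1] e[of 2 2] by (simp_all add: power2_eq_square)
  show "R$$(0,0)*R$$(0,1) + R$$(1,0)*R$$(1,1) + R$$(2,0)*R$$(2,1) = 0"
    "R$$(0,0)*R$$(0,2) + R$$(1,0)*R$$(1,2) + R$$(2,0)*R$$(2,2) = 0"
    "R$$(0,1)*R$$(0,2) + R$$(1,1)*R$$(1,2) + R$$(2,1)*R$$(2,2) = 0"
    using e[of 0 1] e[of 0 2] e[of 1 2] by simp_all
  show "R$$(0,0)*R$$(1,1)*R$$(2,2) - R$$(0,0)*R$$(1,2)*R$$(2,1) - R$$(0,1)*R$$(1,0)*R$$(2,2)
      + R$$(0,1)*R$$(1,2)*R$$(2,0) + R$$(0,2)*R$$(1,0)*R$$(2,1) - R$$(0,2)*R$$(1,1)*R$$(2,0) = 1"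
    using D det_3x3[OF C] by simp
qed

text \<open>The diagonal of a rotation lies in the tetrahedron: apply the trace bound to the rotation
  and to its products with the three rotations diag(1,-1,-1), diag(-1,1,-1), diag(-1,-1,1).\<close>

lemma SO3_diagonal:
  assumes R: "R \<in> SO3"
  shows "tetra (R$$(0,0)) (R$$(1,1)) (R$$(2,2))"
    "R$$(2,2) = R$$(0,0)*R$$(1,1) - R$$(0,1)*R$$(1,0)"
    "R$$(1,1) = R$$(0,0)*R$$(2,2) - R$$(0,2)*R$$(2,0)"
    "R$$(0,0) = R$$(1,1)*R$$(2,2) - R$$(1,2)*R$$(2,1)"
proof -
  define a where "a = R$$(0,0)" define b where "b = R$$(0,1)" define c where "c = R$$(0,2)"
  define d where "d = R$$(1,0)" define e where "e = R$$(1,1)" define f where "f = R$$(1,2)"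
  define g where "g = R$$(2,0)" define h where "h = R$$(2,1)" define k where "k = R$$(2,2)"
  note E = SO3_entries[OF R, folded a_def b_def c_def d_def e_def f_def g_def h_def k_def]
  note F = rotation_diagonal_facts[OF E]
  have "1 + a + (-e) + (-k) \<ge> 0"
    by (rule rotation_diagonal_facts(4)[where a=a and b="-b" and c="-c" and d=d and e="-e"
          and f="-f" and g=g and h="-h" and k="-k"]) (use E in \<open>simp_all add: algebra_simps\<close>)
  moreover have "1 + (-a) + e + (-k) \<ge> 0"
    by (rule rotation_diagonal_facts(4)[where a="-a" and b=b and c="-c" and d="-d" and e=e
          and f="-f" and g="-g" and h=h and k="-k"]) (use E in \<open>simp_all add: algebra_simps\<close>)
  moreover have "1 + (-a) + (-e) + k \<ge> 0"
    by (rule rotation_diagonal_facts(4)[where a="-a" and b="-b" and c=c and d="-d" and e="-e"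
          and f=f and g="-g" and h="-h" and k=k]) (use E in \<open>simp_all add: algebra_simps\<close>)
  ultimately show "tetra (R$$(0,0)) (R$$(1,1)) (R$$(2,2))"
    unfolding tetra_def a_def[symmetric] e_def[symmetric] k_def[symmetric] using F(4) by simp
  show "R$$(2,2) = R$$(0,0)*R$$(1,1) - R$$(0,1)*R$$(1,0)"
    "R$$(1,1) = R$$(0,0)*R$$(2,2) - R$$(0,2)*R$$(2,0)"
    "R$$(0,0) = R$$(1,1)*R$$(2,2) - R$$(1,2)*R$$(2,1)"
    using F(1-3) unfolding a_def b_def c_def d_def e_def f_def g_def h_def k_def .
qed

lemma SO3_right_inverse:
  assumes "R \<in> SO3" shows "R * transpose_mat R = 1\<^sub>m 3"
proof -
  have C: "R \<in> carrier_mat 3 3" and O: "transpose_mat R * R = 1\<^sub>m 3"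
    using assms unfolding SO3_def by auto
  show ?thesis by (rule mat_mult_left_right_inverse[OF _ C O]) (use C in simp)
qed

lemma SO3_transpose:
  assumes "R \<in> SO3" shows "transpose_mat R \<in> SO3"
proof -
  have C: "R \<in> carrier_mat 3 3" and D: "det R = 1" using assms unfolding SO3_def by auto
  show ?thesis unfolding SO3_def using C SO3_right_inverse[OF assms] det_transpose[OF C] D by simp
qed

lemma SO3_one: "1\<^sub>m 3 \<in> SO3"
  unfolding SO3_def by simp

lemma SO3_mult:
  assumes R: "R \<in> SO3" and S: "S \<in> SO3" shows "R * S \<in> SO3"
proof -
  have CR: "R \<in> carrier_mat 3 3" and OR: "transpose_mat R * R = 1\<^sub>m 3" and DR: "det R = 1"
    using R unfolding SO3_def by auto
  have CS: "S \<in> carrier_mat 3 3" and OS: "transpose_mat S * S = 1\<^sub>m 3" and DS: "det S = 1"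
    using S unfolding SO3_def by auto
  have CRT: "transpose_mat R \<in> carrier_mat 3 3" and CST: "transpose_mat S \<in> carrier_mat 3 3"
    using CR CS by auto
  have "transpose_mat (R * S) * (R * S) = (transpose_mat S * transpose_mat R) * (R * S)"
    by (simp add: transpose_mult[OF CR CS])
  also have "\<dots> = transpose_mat S * (transpose_mat R * (R * S))"
    by (rule assoc_mult_mat[OF CST CRT, of _ 3]) (use CR CS in simp)
  also have "transpose_mat R * (R * S) = (transpose_mat R * R) * S"
    by (rule assoc_mult_mat[OF CRT CR CS, symmetric])
  also have "\<dots> = S" using OR CS by simp
  finally have "transpose_mat (R * S) * (R * S) = 1\<^sub>m 3" using OS by simp
  moreover have "det (R * S) = 1" using det_mult[OF CR CS] DR DS by simp
  ultimately show ?thesis unfolding SO3_def using CR CS by simp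
qed

lemma entries_SO3:
  fixes F :: "nat \<Rightarrow> nat \<Rightarrow> real"
  assumes n0: "F 0 0^2 + F 1 0^2 + F 2 0^2 = 1" and n1: "F 0 1^2 + F 1 1^2 + F 2 1^2 = 1"
    and n2: "F 0 2^2 + F 1 2^2 + F 2 2^2 = 1"
    and o01: "F 0 0*F 0 1 + F 1 0*F 1 1 + F 2 0*F 2 1 = 0"
    and o02: "F 0 0*F 0 2 + F 1 0*F 1 2 + F 2 0*F 2 2 = 0"
    and o12: "F 0 1*F 0 2 + F 1 1*F 1 2 + F 2 1*F 2 2 = 0"
    and d: "F 0 0*F 1 1*F 2 2 - F 0 0*F 1 2*F 2 1 - F 0 1*F 1 0*F 2 2 + F 0 1*F 1 2*F 2 0
      + F 0 2*F 1 0*F 2 1 - F 0 2*F 1 1*F 2 0 = 1"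
  shows "Matrix.mat 3 3 (\<lambda>(i,j). F i j) \<in> SO3"
proof -
  let ?R = "Matrix.mat 3 3 (\<lambda>(i,j). F i j)"
  have C: "?R \<in> carrier_mat 3 3" and CT: "transpose_mat ?R \<in> carrier_mat 3 3" by simp_all
  have "transpose_mat ?R * ?R = 1\<^sub>m 3"
  proof (rule eq_matI)
    fix i j assume "i < dim_row (1\<^sub>m 3 :: real mat)" "j < dim_col (1\<^sub>m 3 :: real mat)"
    hence ij: "i < 3" "j < 3" by auto
    hence "i = 0 \<or> i = 1 \<or> i = 2" "j = 0 \<or> j = 1 \<or> j = 2" by auto
    thus "(transpose_mat ?R * ?R)$$(i,j) = 1\<^sub>m 3 $$ (i,j)"
      unfolding mult_3x3[OF CT C ij] using ij n0 n1 n2 o01 o02 o12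
      by (auto simp: power2_eq_square algebra_simps)
  qed auto
  moreover have "det ?R = 1" using det_3x3[OF C] d by simp
  ultimately show ?thesis unfolding SO3_def by simp
qed

text \<open>The rotation attached to the quaternion p + q i + r j + s k.\<close>

definition quat_rot :: "real \<Rightarrow> real \<Rightarrow> real \<Rightarrow> real \<Rightarrow> nat \<Rightarrow> nat \<Rightarrow> real" where
  "quat_rot p q r s i j =
    (if i = 0 then (if j = 0 then p^2+q^2-r^2-s^2 else if j = 1 then 2*(q*r - p*s) else 2*(q*s + p*r))
     else if i = 1 then (if j = 0 then 2*(q*r + p*s) else if j = 1 then p^2-q^2+r^2-s^2 else 2*(r*s - p*q))
     else (if j = 0 then 2*(q*s - p*r) else if j = 1 then 2*(r*s + p*q) else p^2-q^2-r^2+s^2))"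

text \<open>Unit quaternions give rotations; all identities are polynomial in p, q, r, s and the norm.\<close>

lemma quat_rot_SO3:
  fixes p q r s :: real
  assumes n: "p^2+q^2+r^2+s^2 = 1"
  shows "Matrix.mat 3 3 (\<lambda>(i,j). quat_rot p q r s i j) \<in> SO3"
proof (rule entries_SO3)
  let ?F = "quat_rot p q r s" and ?N = "p^2+q^2+r^2+s^2"
  have "?F 0 0^2 + ?F 1 0^2 + ?F 2 0^2 = ?N^2" "?F 0 1^2 + ?F 1 1^2 + ?F 2 1^2 = ?N^2"
    "?F 0 2^2 + ?F 1 2^2 + ?F 2 2^2 = ?N^2"
    "?F 0 0*?F 1 1*?F 2 2 - ?F 0 0*?F 1 2*?F 2 1 - ?F 0 1*?F 1 0*?F 2 2 + ?F 0 1*?F 1 2*?F 2 0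
      + ?F 0 2*?F 1 0*?F 2 1 - ?F 0 2*?F 1 1*?F 2 0 = ?N^3"
    unfolding quat_rot_def by (simp_all add: power2_eq_square power3_eq_cube algebra_simps)
  thus "?F 0 0^2 + ?F 1 0^2 + ?F 2 0^2 = 1" "?F 0 1^2 + ?F 1 1^2 + ?F 2 1^2 = 1"
    "?F 0 2^2 + ?F 1 2^2 + ?F 2 2^2 = 1"
    "?F 0 0*?F 1 1*?F 2 2 - ?F 0 0*?F 1 2*?F 2 1 - ?F 0 1*?F 1 0*?F 2 2 + ?F 0 1*?F 1 2*?F 2 0
      + ?F 0 2*?F 1 0*?F 2 1 - ?F 0 2*?F 1 1*?F 2 0 = 1"
    using n by simp_all
  show "?F 0 0*?F 0 1 + ?F 1 0*?F 1 1 + ?F 2 0*?F 2 1 = 0"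
    "?F 0 0*?F 0 2 + ?F 1 0*?F 1 2 + ?F 2 0*?F 2 2 = 0"
    "?F 0 1*?F 0 2 + ?F 1 1*?F 1 2 + ?F 2 1*?F 2 2 = 0"
    unfolding quat_rot_def by (simp_all add: power2_eq_square algebra_simps)
qed

text \<open>Every point of the tetrahedron is the diagonal of a rotation: its barycentric
  coordinates are the squares of the quaternion components.\<close>

lemma tetra_imp_rotation_diagonal:
  assumes t: "tetra q0 q1 q2"
  shows "\<exists>R\<in>SO3. R$$(0,0) = q0 \<and> R$$(1,1) = q1 \<and> R$$(2,2) = q2"
proof -
  define A where "A = (1+q0+q1+q2)/4"
  define B where "B = (1+q0-q1-q2)/4"
  define C where "C = (1-q0+q1-q2)/4"
  define D where "D = (1-q0-q1+q2)/4"
  have nn: "A \<ge> 0" "B \<ge> 0" "C \<ge> 0" "D \<ge> 0"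
    using t unfolding tetra_def A_def B_def C_def D_def by auto
  define p where "p = sqrt A"
  define q where "q = sqrt B"
  define r where "r = sqrt C"
  define s where "s = sqrt D"
  have sq: "p^2 = A" "q^2 = B" "r^2 = C" "s^2 = D" unfolding p_def q_def r_def s_def using nn by simp_all
  have n: "p^2+q^2+r^2+s^2 = 1" unfolding sq A_def B_def C_def D_def by (simp add: field_simps)
  let ?R = "Matrix.mat 3 3 (\<lambda>(i,j). quat_rot p q r s i j)"
  have "?R \<in> SO3" by (rule quat_rot_SO3[OF n])
  moreover have "?R$$(0,0) = q0" "?R$$(1,1) = q1" "?R$$(2,2) = q2"
    by (simp_all add: quat_rot_def sq A_def B_def C_def D_def field_simps)
  ultimately show ?thesis by blast
qed


section \<open>Reduction to the image of the tetrahedron\<close>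

text \<open>The pairs (trace, sum of principal 2x2 minors) that are realised by matrices diag(x,y,z) * R
  with R a rotation: by the lemma below these are the images of points of the tetrahedron.\<close>

definition tetra_image :: "real \<Rightarrow> real \<Rightarrow> real \<Rightarrow> real \<Rightarrow> real \<Rightarrow> bool" where
  "tetra_image x y z u v \<longleftrightarrow>
     (\<exists>q0 q1 q2. tetra q0 q1 q2 \<and> u = x*q0 + y*q1 + z*q2 \<and> v = y*z*q0 + x*z*q1 + x*y*q2)"

text \<open>The invariants of diag(s) * R depend on R only through its diagonal; for the minors this
  uses that diagonal entries of a rotation equal their complementary minors.\<close>

lemma diag_times_rotation_invariants:
  assumes R: "R \<in> SO3"
  shows "mat_diag 3 s * R \<in> carrier_mat 3 3"
    "det (mat_diag 3 s * R) = s 0 * s 1 * s 2"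
    "trace3 (mat_diag 3 s * R) = s 0 * R$$(0,0) + s 1 * R$$(1,1) + s 2 * R$$(2,2)"
    "minors3 (mat_diag 3 s * R) = s 1 * s 2 * R$$(0,0) + s 0 * s 2 * R$$(1,1) + s 0 * s 1 * R$$(2,2)"
proof -
  have C: "R \<in> carrier_mat 3 3" using R unfolding SO3_def by auto
  have E: "mat_diag 3 s * R = Matrix.mat 3 3 (\<lambda>(i,j). s i * R $$ (i,j))"
    by (rule mat_diag_mult_left[OF C])
  show X: "mat_diag 3 s * R \<in> carrier_mat 3 3" by (rule mult_carrier_mat[OF mat_diag_dim C])
  have "det (mat_diag 3 s * R) = s 0 * s 1 * s 2 * (R$$(0,0)*R$$(1,1)*R$$(2,2)
      - R$$(0,0)*R$$(1,2)*R$$(2,1) - R$$(0,1)*R$$(1,0)*R$$(2,2) + R$$(0,1)*R$$(1,2)*R$$(2,0)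
      + R$$(0,2)*R$$(1,0)*R$$(2,1) - R$$(0,2)*R$$(1,1)*R$$(2,0))"
    unfolding det_3x3[OF X] unfolding E by (simp add: algebra_simps)
  thus "det (mat_diag 3 s * R) = s 0 * s 1 * s 2" using SO3_entries(7)[OF R] by simp
  show "trace3 (mat_diag 3 s * R) = s 0 * R$$(0,0) + s 1 * R$$(1,1) + s 2 * R$$(2,2)"
    unfolding trace3_def E by simp
  have "minors3 (mat_diag 3 s * R) = s 0 * s 1 * (R$$(0,0)*R$$(1,1) - R$$(0,1)*R$$(1,0))
     + s 0 * s 2 * (R$$(0,0)*R$$(2,2) - R$$(0,2)*R$$(2,0))
     + s 1 * s 2 * (R$$(1,1)*R$$(2,2) - R$$(1,2)*R$$(2,1))"
    unfolding minors3_def E by (simp add: algebra_simps)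
  thus "minors3 (mat_diag 3 s * R)
      = s 1 * s 2 * R$$(0,0) + s 0 * s 2 * R$$(1,1) + s 0 * s 1 * R$$(2,2)"
    unfolding SO3_diagonal(2-4)[OF R, symmetric] by simp
qed

text \<open>If O1 * Delta * O2 = D with rotations O1, O2, then Delta = O1^T (D * W) O1 for the rotation
  W = O2^T * O1^T, so Delta is similar to D * W.\<close>

lemma rotation_equivalence_similar:
  assumes S1: "O1 \<in> SO3" and S2: "O2 \<in> SO3" and C: "\<Delta> \<in> carrier_mat 3 3"
    and H: "O1 * \<Delta> * O2 = mat_diag 3 s"
  shows "similar_mat (mat_diag 3 s * (transpose_mat O2 * transpose_mat O1)) \<Delta>"
proof -
  have C1: "O1 \<in> carrier_mat 3 3" and C2: "O2 \<in> carrier_mat 3 3" using S1 S2 unfolding SO3_def by auto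
  have C1T: "transpose_mat O1 \<in> carrier_mat 3 3" and C2T: "transpose_mat O2 \<in> carrier_mat 3 3"
    using C1 C2 by auto
  have CD: "O1 * \<Delta> \<in> carrier_mat 3 3" using C1 C by simp
  have r1: "O1 * transpose_mat O1 = 1\<^sub>m 3" and r2: "O2 * transpose_mat O2 = 1\<^sub>m 3"
    using SO3_right_inverse[OF S1] SO3_right_inverse[OF S2] .
  have l1: "transpose_mat O1 * O1 = 1\<^sub>m 3" using S1 unfolding SO3_def by auto
  have "O2 * (transpose_mat O2 * transpose_mat O1) = (O2 * transpose_mat O2) * transpose_mat O1"
    by (rule assoc_mult_mat[OF C2 C2T C1T, symmetric])
  also have "\<dots> = transpose_mat O1" unfolding r2 using C1T by simp
  finally have a1: "O2 * (transpose_mat O2 * transpose_mat O1) = transpose_mat O1" .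
  have "mat_diag 3 s * (transpose_mat O2 * transpose_mat O1)
      = (O1 * \<Delta>) * (O2 * (transpose_mat O2 * transpose_mat O1))"
    unfolding H[symmetric] by (rule assoc_mult_mat[OF CD C2, of _ 3]) (use C1T C2T in simp)
  also have "\<dots> = O1 * \<Delta> * transpose_mat O1" unfolding a1 ..
  finally have XE: "mat_diag 3 s * (transpose_mat O2 * transpose_mat O1) = O1 * \<Delta> * transpose_mat O1" .
  show ?thesis
    by (rule similar_matI[where n=3 and P=O1 and Q="transpose_mat O1"])
       (use C C1 C1T r1 l1 XE in auto)
qed

lemma similar_invariants_3x3:
  assumes "similar_mat X Y" and X: "X \<in> carrier_mat 3 3" and Y: "Y \<in> carrier_mat 3 3"
  shows "det X = det Y" "minors3 X = minors3 Y" "trace3 X = trace3 Y"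
proof -
  have "char_poly X = char_poly Y" using assms(1) by (rule char_poly_similar)
  thus "det X = det Y" "minors3 X = minors3 Y" "trace3 X = trace3 Y"
    unfolding char_poly_3x3[OF X] char_poly_3x3[OF Y] minors3_def trace3_def
    by (simp_all only: pCons_eq_iff neg_equal_iff_equal)
qed

text \<open>A decomposition O1 * Delta * O2 = diag(s) yields, through the rotation W = O2^T O1^T, a point
  of the tetrahedron (the diagonal of W) whose image is (trace, sum of minors) of Delta.\<close>

lemma decomposition_imp_tetra_image:
  fixes l :: "nat \<Rightarrow> complex" and s :: "nat \<Rightarrow> real"
  assumes C: "\<Delta> \<in> carrier_mat 3 3"
    and cp: "char_poly (map_mat complex_of_real \<Delta>) = (\<Prod>i<3. [:- l i, 1:])"
    and S1: "O1 \<in> SO3" and S2: "O2 \<in> SO3" and H: "O1 * \<Delta> * O2 = mat_diag 3 s"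
  shows "\<exists>u v. of_real u = l 0 + l 1 + l 2 \<and> of_real v = l 0*l 1 + l 0*l 2 + l 1*l 2
            \<and> of_real (s 0 * s 1 * s 2) = l 0*l 1*l 2 \<and> tetra_image (s 0) (s 1) (s 2) u v"
proof -
  define W where "W = transpose_mat O2 * transpose_mat O1"
  have WS: "W \<in> SO3" unfolding W_def by (rule SO3_mult[OF SO3_transpose[OF S2] SO3_transpose[OF S1]])
  note X = diag_times_rotation_invariants[OF WS, of s]
  have inv: "det (mat_diag 3 s * W) = det \<Delta>" "minors3 (mat_diag 3 s * W) = minors3 \<Delta>"
      "trace3 (mat_diag 3 s * W) = trace3 \<Delta>"
    using similar_invariants_3x3[OF rotation_equivalence_similar[OF S1 S2 C H, folded W_def] X(1) C]
    by simp_all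
  have "tetra_image (s 0) (s 1) (s 2) (trace3 \<Delta>) (minors3 \<Delta>)"
    unfolding tetra_image_def inv[symmetric] X(3,4) using SO3_diagonal(1)[OF WS]
    by (intro exI[of _ "W$$(0,0)"] exI[of _ "W$$(1,1)"] exI[of _ "W$$(2,2)"]) (simp add: algebra_simps)
  moreover have "of_real (trace3 \<Delta>) = l 0 + l 1 + l 2" "of_real (minors3 \<Delta>) = l 0*l 1 + l 0*l 2 + l 1*l 2"
      "of_real (s 0 * s 1 * s 2) = l 0*l 1*l 2"
    using cp char_poly_eq_iff_invariants[OF C] X(2) inv by auto
  ultimately show ?thesis by blast
qed

text \<open>Conversely, for a rotation W with the prescribed diagonal, Delta = diag(s) * W is a
  solution with O1 = 1 and O2 = W^T.\<close>

lemma tetra_image_imp_decomposition: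
  fixes l :: "nat \<Rightarrow> complex" and s :: "nat \<Rightarrow> real"
  assumes e1: "of_real u = l 0 + l 1 + l 2" and e2: "of_real v = l 0*l 1 + l 0*l 2 + l 1*l 2"
    and e3: "of_real (s 0 * s 1 * s 2) = l 0*l 1*l 2" and R: "tetra_image (s 0) (s 1) (s 2) u v"
  shows "\<exists>\<Delta> O1 O2. \<Delta> \<in> carrier_mat 3 3
            \<and> char_poly (map_mat complex_of_real \<Delta>) = (\<Prod>i<3. [:- l i, 1:])
            \<and> O1 \<in> SO3 \<and> O2 \<in> SO3
            \<and> O1 * \<Delta> * O2 = mat_diag 3 s"
proof -
  obtain q0 q1 q2 where t: "tetra q0 q1 q2" and u: "u = s 0*q0 + s 1*q1 + s 2*q2"
      and v: "v = s 1*s 2*q0 + s 0*s 2*q1 + s 0*s 1*q2"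
    using R unfolding tetra_image_def by blast
  obtain W where WS: "W \<in> SO3" and d: "W$$(0,0) = q0" "W$$(1,1) = q1" "W$$(2,2) = q2"
    using tetra_imp_rotation_diagonal[OF t] by blast
  have CW: "W \<in> carrier_mat 3 3" using WS unfolding SO3_def by auto
  note X = diag_times_rotation_invariants[OF WS, of s]
  have "1\<^sub>m 3 * (mat_diag 3 s * W) * transpose_mat W = mat_diag 3 s * (W * transpose_mat W)"
    unfolding left_mult_one_mat[OF X(1)]
    by (rule assoc_mult_mat[OF mat_diag_dim CW, of _ 3]) (use CW in simp)
  also have "\<dots> = mat_diag 3 s" unfolding SO3_right_inverse[OF WS] by (rule right_mult_one_mat[OF mat_diag_dim])
  finally have "1\<^sub>m 3 * (mat_diag 3 s * W) * transpose_mat W = mat_diag 3 s" .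
  moreover have "char_poly (map_mat complex_of_real (mat_diag 3 s * W)) = (\<Prod>i<3. [:- l i, 1:])"
    unfolding char_poly_eq_iff_invariants[OF X(1)] X(2-4) d using e1 e2 e3 u v by (simp add: algebra_simps)
  ultimately show ?thesis using X(1) SO3_one SO3_transpose[OF WS] by blast
qed

lemma decomposition_iff_tetra_image:
  fixes l :: "nat \<Rightarrow> complex" and s :: "nat \<Rightarrow> real"
  shows "(\<exists>\<Delta> O1 O2. \<Delta> \<in> carrier_mat 3 3
            \<and> char_poly (map_mat complex_of_real \<Delta>) = (\<Prod>i<3. [:- l i, 1:])
            \<and> O1 \<in> SO3 \<and> O2 \<in> SO3
            \<and> O1 * \<Delta> * O2 = mat_diag 3 s)
    \<longleftrightarrow> (\<exists>u v. of_real u = l 0 + l 1 + l 2 \<and> of_real v = l 0*l 1 + l 0*l 2 + l 1*l 2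
            \<and> of_real (s 0 * s 1 * s 2) = l 0*l 1*l 2 \<and> tetra_image (s 0) (s 1) (s 2) u v)"
  using decomposition_imp_tetra_image tetra_image_imp_decomposition by meson

section \<open>The tetrahedron image is a polygon\<close>

text \<open>For a >= b >= |c| the image of the tetrahedron under
  q |-> (a q0 + b q1 + c q2, b c q0 + a c q1 + a b q2) is the polygon cut out by these six
  inequalities (one for each edge of the tetrahedron that can appear on the boundary).\<close>

definition polygon :: "real \<Rightarrow> real \<Rightarrow> real \<Rightarrow> real \<Rightarrow> real \<Rightarrow> bool" where
  "polygon a b c u v \<longleftrightarrow> 0 \<le> a^2 - a*u + v - b*c \<and> 0 \<le> a^2 + a*u + v + b*c \<and> c^2 - c*u + v - a*b \<le> 0
     \<and> 0 \<le> c^2 + c*u + v + a*b \<and> c - a - b \<le> u \<and> u \<le> a + b + c"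

text \<open>Each defining expression of the polygon is, on the image of the tetrahedron, a nonnegative
  combination of the barycentric coordinates of the point.\<close>

lemma tetra_image_imp_polygon:
  assumes ab: "a \<ge> b" and bc: "b \<ge> \<bar>c\<bar>" and R: "tetra_image a b c u v"
  shows "polygon a b c u v"
proof -
  obtain q0 q1 q2 where t: "tetra q0 q1 q2" and u: "u = a*q0+b*q1+c*q2"
      and v: "v = b*c*q0 + a*c*q1 + a*b*q2"
    using R unfolding tetra_image_def by blast
  define fA where "fA = 1+q0+q1+q2"
  define fB where "fB = 1+q0-q1-q2"
  define fC where "fC = 1-q0+q1-q2"
  define fD where "fD = 1-q0-q1+q2"
  have f: "fA \<ge> 0" "fB \<ge> 0" "fC \<ge> 0" "fD \<ge> 0"
    using t unfolding tetra_def fA_def fB_def fC_def fD_def by auto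
  have s: "a - b \<ge> 0" "a + c \<ge> 0" "a - c \<ge> 0" "b + c \<ge> 0" "b - c \<ge> 0" "a + b \<ge> 0"
    using ab bc by linarith+
  have "a^2 - a*u + v - b*c = (fC*((a-b)*(a+c)) + fD*((a+b)*(a-c)))/2"
    "a^2 + a*u + v + b*c = (fA*((a+b)*(a+c)) + fB*((a-b)*(a-c)))/2"
    "-(c^2 - c*u + v - a*b) = (fB*((a-c)*(b+c)) + fC*((a+c)*(b-c)))/2"
    "c^2 + c*u + v + a*b = (fA*((a+c)*(b+c)) + fD*((a-c)*(b-c)))/2"
    "a + b + c - u = (fB*(b+c) + fC*(a+c) + fD*(a+b))/2"
    "u - (c - a - b) = (fA*(a+b) + fB*(a-c) + fC*(b-c))/2"
    unfolding u v fA_def fB_def fC_def fD_def by (simp_all add: algebra_simps power2_eq_square)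
  moreover have "0 \<le> (fC*((a-b)*(a+c)) + fD*((a+b)*(a-c)))/2"
    "0 \<le> (fA*((a+b)*(a+c)) + fB*((a-b)*(a-c)))/2"
    "0 \<le> (fB*((a-c)*(b+c)) + fC*((a+c)*(b-c)))/2"
    "0 \<le> (fA*((a+c)*(b+c)) + fD*((a-c)*(b-c)))/2"
    "0 \<le> (fB*(b+c) + fC*(a+c) + fD*(a+b))/2"
    "0 \<le> (fA*(a+b) + fB*(a-c) + fC*(b-c))/2"
    using f s by simp_all
  ultimately show ?thesis unfolding polygon_def by linarith
qed

text \<open>In the coordinates
  alpha = a + b + c - u and tau = a b + b c + c a - v the tetrahedron vertices B, C, D are mapped
  to 2 (b+c) (1, a), 2 (a+c) (1, b), 2 (a+b) (1, c) and the vertex A to the origin; a point on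
  the segment between the rays of two of these vertices is split as follows.\<close>

lemma edge_weights:
  fixes p q P Q \<alpha> \<tau> :: real
  assumes pq: "q < p" and lo: "q*\<alpha> \<le> \<tau>" and hi: "\<tau> \<le> p*\<alpha>" and P: "0 < P" and Q: "Q = P + (p - q)"
    and cap: "\<tau> + (P - q)*\<alpha> \<le> 2*P*Q"
  shows "\<exists>wP wQ. 0 \<le> wP \<and> 0 \<le> wQ \<and> wP + wQ \<le> 1
    \<and> \<alpha> = 2*P*wP + 2*Q*wQ \<and> \<tau> = 2*p*P*wP + 2*q*Q*wQ"
proof -
  define d where "d = p - q"
  have p: "p = q + d" and Qd: "Q = P + d" and dp: "0 < d" using pq Q unfolding d_def by simp_all
  have Qp: "0 < Q" using P dp Qd by simp
  define wP where "wP = (\<tau> - q*\<alpha>) / (d * (2*P))"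
  define wQ where "wQ = (p*\<alpha> - \<tau>) / (d * (2*Q))"
  have "(wP + wQ) * (2*P*Q) = ((\<tau> - q*\<alpha>) * Q + (p*\<alpha> - \<tau>) * P) / d"
    unfolding wP_def wQ_def using dp P Qp by (simp add: field_simps)
  also have "(\<tau> - q*\<alpha>) * Q + (p*\<alpha> - \<tau>) * P = d * (\<tau> + (P - q)*\<alpha>)"
    unfolding p Qd by (simp add: algebra_simps)
  finally have "(wP + wQ) * (2*P*Q) \<le> 2*P*Q" using dp cap by simp
  hence "wP + wQ \<le> 1" using P Qp by simp
  moreover have "0 \<le> wP" "0 \<le> wQ" unfolding wP_def wQ_def using lo hi dp P Qp by simp_all
  moreover have "\<alpha> = 2*P*wP + 2*Q*wQ" "\<tau> = 2*p*P*wP + 2*q*Q*wQ"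
    unfolding wP_def wQ_def p using dp P Qp by (simp_all add: field_simps)
  ultimately show ?thesis by blast
qed
text \<open>The weights of the vertices B, C, D for a point (alpha, tau) of the polygon: the point lies on
  the ray of D, or in the cone spanned by C and D, or in the cone spanned by B and C.\<close>

lemma polygon_weights:
  fixes a b c \<alpha> \<tau> :: real
  assumes ab: "a \<ge> b" and bc: "b \<ge> \<bar>c\<bar>"
    and F1: "\<tau> \<le> a*\<alpha>" and F3: "c*\<alpha> \<le> \<tau>"
    and F2: "\<tau> + a*\<alpha> \<le> 2*(a+b)*(a+c)" and F4: "\<tau> + c*\<alpha> \<le> 2*(a+c)*(b+c)"
    and F5: "0 \<le> \<alpha>" "\<alpha> \<le> 2*(a+b)"
  shows "\<exists>wB wC wD. wB \<ge> 0 \<and> wC \<ge> 0 \<and> wD \<ge> 0 \<and> wB + wC + wD \<le> 1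
     \<and> \<alpha> = 2*(b+c)*wB + 2*(a+c)*wC + 2*(a+b)*wD
     \<and> \<tau> = 2*a*(b+c)*wB + 2*b*(a+c)*wC + 2*c*(a+b)*wD"
proof -
  consider (D) "\<tau> = c*\<alpha>" | (CD) "c*\<alpha> < \<tau>" "\<tau> \<le> b*\<alpha>" | (BC) "b*\<alpha> < \<tau>" using F3 by linarith
  then show ?thesis
  proof cases
    case D
    show ?thesis
    proof (cases "a + b = 0")
      case True
      hence "a = 0" "b = 0" "c = 0" using ab bc by auto
      thus ?thesis using F5 D by (intro exI[of _ 0]) simp
    next
      case False
      hence "a + b > 0" using ab bc by linarith
      thus ?thesis using F5 D
        by (intro exI[of _ 0] exI[of _ 0] exI[of _ "\<alpha>/(2*(a+b))"]) (auto simp: field_simps)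
    qed
  next
    case CD
    have "a + c > 0"
    proof (rule ccontr)
      assume "\<not> a + c > 0"
      hence "c = -a" using ab bc by linarith
      thus False using F2 CD by (simp add: algebra_simps)
    qed
    moreover have "c < b" using CD bc by (cases "b = c") auto
    moreover have "\<tau> + (a + c - c)*\<alpha> \<le> 2*(a+c)*(a+b)" using F2 by (simp add: algebra_simps)
    ultimately obtain wC wD where "0 \<le> wC" "0 \<le> wD" "wC + wD \<le> 1"
        "\<alpha> = 2*(a+c)*wC + 2*(a+b)*wD" "\<tau> = 2*b*(a+c)*wC + 2*c*(a+b)*wD"
      using edge_weights[of c b \<alpha> \<tau> "a+c" "a+b"] CD by fastforce
    thus ?thesis by (intro exI[of _ 0] exI[of _ wC] exI[of _ wD]) simp
  next
    case BC
    have "b + c > 0"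
    proof (rule ccontr)
      assume "\<not> b + c > 0"
      hence "c = -b" using bc by linarith
      thus False using F4 BC by (simp add: algebra_simps)
    qed
    moreover have "b < a" using BC F1 ab by (cases "a = b") auto
    moreover have "\<tau> + (b + c - b)*\<alpha> \<le> 2*(b+c)*(a+c)" using F4 by (simp add: algebra_simps)
    ultimately obtain wB wC where "0 \<le> wB" "0 \<le> wC" "wB + wC \<le> 1"
        "\<alpha> = 2*(b+c)*wB + 2*(a+c)*wC" "\<tau> = 2*a*(b+c)*wB + 2*b*(a+c)*wC"
      using edge_weights[of b a \<alpha> \<tau> "b+c" "a+c"] BC F1 by fastforce
    thus ?thesis by (intro exI[of _ wB] exI[of _ wC] exI[of _ 0]) simp
  qed
qed

text \<open>A point of the polygon is the image of the tetrahedron point with barycentric weights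
  1 - wB - wC - wD, wB, wC, wD at the vertices A, B, C, D.\<close>

lemma polygon_imp_tetra_image:
  assumes ab: "a \<ge> b" and bc: "b \<ge> \<bar>c\<bar>" and F: "polygon a b c u v"
  shows "tetra_image a b c u v"
proof -
  define \<alpha> where "\<alpha> = a + b + c - u"
  define \<tau> where "\<tau> = a*b + b*c + c*a - v"
  have "\<tau> \<le> a*\<alpha>" "c*\<alpha> \<le> \<tau>" "\<tau> + a*\<alpha> \<le> 2*(a+b)*(a+c)" "\<tau> + c*\<alpha> \<le> 2*(a+c)*(b+c)"
    "0 \<le> \<alpha>" "\<alpha> \<le> 2*(a+b)"
    using F unfolding polygon_def \<alpha>_def \<tau>_def by (simp_all add: algebra_simps power2_eq_square)
  then obtain wB wC wD where w: "wB \<ge> 0" "wC \<ge> 0" "wD \<ge> 0" "wB + wC + wD \<le> 1"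
      and al: "\<alpha> = 2*(b+c)*wB + 2*(a+c)*wC + 2*(a+b)*wD"
      and ta: "\<tau> = 2*a*(b+c)*wB + 2*b*(a+c)*wC + 2*c*(a+b)*wD"
    using polygon_weights[OF ab bc] by blast
  define q0 where "q0 = 1 - 2*(wC+wD)"
  define q1 where "q1 = 1 - 2*(wB+wD)"
  define q2 where "q2 = 1 - 2*(wB+wC)"
  have "tetra q0 q1 q2" unfolding tetra_def q0_def q1_def q2_def using w by auto
  moreover have "u = a*q0+b*q1+c*q2"
    using al unfolding \<alpha>_def q0_def q1_def q2_def by (simp add: algebra_simps)
  moreover have "v = b*c*q0 + a*c*q1 + a*b*q2"
    using ta unfolding \<tau>_def q0_def q1_def q2_def by (simp add: algebra_simps)
  ultimately show ?thesis unfolding tetra_image_def by blast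
qed


section \<open>The polygon in terms of the eigenvalues\<close>

text \<open>Let u, v be the first two elementary symmetric functions of the eigenvalues and
  f(t) = t^3 - u t^2 + v t - a b c their characteristic polynomial.  The first four polygon
  expressions are f(a)/a, -f(-a)/a, f(c)/c and -f(-c)/c; we factor them for a real spectrum
  ra, rb, rc and for a spectrum x +- i y, r.\<close>

lemma polygon_factor_real:
  fixes a b c ra rb rc u v :: real
  assumes u: "u = ra+rb+rc" and v: "v = ra*rb+ra*rc+rb*rc" and d: "ra*rb*rc = a*b*c"
  shows "a*(a^2 - a*u + v - b*c) = (a-ra)*(a-rb)*(a-rc)"
    "a*(a^2 + a*u + v + b*c) = (a+ra)*(a+rb)*(a+rc)"
    "c*(c^2 - c*u + v - a*b) = (c-ra)*(c-rb)*(c-rc)"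
    "c*(c^2 + c*u + v + a*b) = (c+ra)*(c+rb)*(c+rc)"
proof -
  have cubic: "t^3 - u*t^2 + v*t - a*b*c = (t-ra)*(t-rb)*(t-rc)" for t
    unfolding u v d[symmetric] by (simp add: algebra_simps power2_eq_square power3_eq_cube)
  show "a*(a^2 - a*u + v - b*c) = (a-ra)*(a-rb)*(a-rc)"
    "a*(a^2 + a*u + v + b*c) = (a+ra)*(a+rb)*(a+rc)"
    "c*(c^2 - c*u + v - a*b) = (c-ra)*(c-rb)*(c-rc)"
    "c*(c^2 + c*u + v + a*b) = (c+ra)*(c+rb)*(c+rc)"
    using cubic[of a] cubic[of "-a"] cubic[of c] cubic[of "-c"]
    by (simp_all add: algebra_simps power2_eq_square power3_eq_cube)
qed

lemma polygon_factor_pair: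
  fixes a b c x y r u v :: real
  assumes u: "u = 2*x + r" and v: "v = x^2 + y^2 + 2*x*r" and d: "(x^2+y^2)*r = a*b*c"
  shows "a*(a^2 - a*u + v - b*c) = (a-r)*((a-x)^2+y^2)"
    "a*(a^2 + a*u + v + b*c) = (a+r)*((a+x)^2+y^2)"
    "c*(c^2 - c*u + v - a*b) = (c-r)*((c-x)^2+y^2)"
    "c*(c^2 + c*u + v + a*b) = (c+r)*((c+x)^2+y^2)"
proof -
  have cubic: "t^3 - u*t^2 + v*t - a*b*c = (t-r)*((t-x)^2+y^2)" for t
    unfolding u v d[symmetric] by (simp add: algebra_simps power2_eq_square power3_eq_cube)
  show "a*(a^2 - a*u + v - b*c) = (a-r)*((a-x)^2+y^2)"
    "a*(a^2 + a*u + v + b*c) = (a+r)*((a+x)^2+y^2)"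
    "c*(c^2 - c*u + v - a*b) = (c-r)*((c-x)^2+y^2)"
    "c*(c^2 + c*u + v + a*b) = (c+r)*((c+x)^2+y^2)"
    using cubic[of a] cubic[of "-a"] cubic[of c] cubic[of "-c"]
    by (simp_all add: algebra_simps power2_eq_square power3_eq_cube)
qed

lemma polygon_neg: "polygon a b c u v \<Longrightarrow> polygon a b (-c) (-u) v"
  unfolding polygon_def by (simp add: algebra_simps power2_eq_square)

lemma polygon_from_cubic_bounds:
  assumes ab: "a \<ge> b" and bc: "b \<ge> \<bar>c\<bar>"
    and F1: "0 \<le> a^2 - a*u + v - b*c" and F2: "0 \<le> a^2 + a*u + v + b*c" and F3: "c^2 - c*u + v - a*b \<le> 0"
    and F4: "0 \<le> c^2 + c*u + v + a*b" and U: "\<bar>u\<bar> \<le> 3*a"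
  shows "polygon a b c u v"
proof -
  have e1: "(a^2 - a*u + v - b*c) - (c^2 - c*u + v - a*b) = (a-c)*(a+b+c-u)" by (simp add: algebra_simps power2_eq_square)
  have e2: "(a^2 + a*u + v + b*c) - (c^2 - c*u + v - a*b) = (a+c)*(u - (c-a-b))" by (simp add: algebra_simps power2_eq_square)
  have "u \<le> a+b+c"
  proof (cases "a > c")
    case True
    have "0 \<le> (a-c)*(a+b+c-u)" using e1 F1 F3 by linarith
    thus ?thesis using True by (simp add: zero_le_mult_iff)
  next
    case False
    hence "a = c" "b = a" using ab bc by auto
    thus ?thesis using U by simp
  qed
  moreover have "c - a - b \<le> u"
  proof (cases "a + c > 0")
    case True
    have "0 \<le> (a+c)*(u - (c-a-b))" using e2 F2 F3 by linarith
    thus ?thesis using True by (simp add: zero_le_mult_iff)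
  next
    case False
    hence "c = -a" "b = a" using ab bc by auto
    thus ?thesis using U by simp
  qed
  ultimately show ?thesis unfolding polygon_def using F1 F2 F3 F4 by simp
qed


subsection \<open>A real spectrum\<close>

text \<open>The key case of the upper bound: on the polygon there are no real eigenvalues ra > a and
  rc >= a.  Otherwise ra rc > a^2, so the determinant forces |rb| < |c| (or rb = 0 = c, when
  v > a b violates the condition at c); then the condition at c forces c = rc = a = b, which
  contradicts the bound on u.\<close>

lemma real_root_le_top_aux:
  fixes a b c ra rb rc u v :: real
  assumes ab: "a \<ge> b" and bc: "b \<ge> \<bar>c\<bar>" and apos: "a > 0"
    and u: "u = ra+rb+rc" and v: "v = ra*rb+ra*rc+rb*rc" and d: "ra*rb*rc = a*b*c"
    and F: "polygon a b c u v" and ra: "ra > a" and rc: "a \<le> rc"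
  shows False
proof -
  have F3: "c^2 - c*u + v - a*b \<le> 0" and F5: "u \<le> a+b+c" using F unfolding polygon_def by auto
  have "a*a \<le> a*rc" "a*rc < ra*rc" using ra rc apos by simp_all
  hence big: "a*a < ra*rc" by linarith
  have rarc: "ra*rc > 0" using big apos by (smt (verit) mult_pos_pos)
  have rb_small: "\<bar>rb\<bar> * (a*a) < a*a*\<bar>c\<bar>" if "c \<noteq> 0"
  proof (cases "rb = 0")
    case False
    have "\<bar>rb\<bar> * (a*a) < \<bar>rb\<bar> * (ra*rc)" using big False by simp
    also have "\<dots> = a*b*\<bar>c\<bar>" using arg_cong[OF d, of abs] ra rc apos ab bc by (simp add: abs_mult ac_simps)
    also have "\<dots> \<le> a*a*\<bar>c\<bar>" using ab apos by (simp add: mult_right_mono)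
    finally show ?thesis .
  qed (use that apos in simp)
  show False
  proof (cases "c = 0")
    case True
    hence "(ra*rc)*rb = 0" using d by (simp add: ac_simps)
    hence "rb = 0" using rarc by auto
    hence "v = ra*rc" using v by simp
    moreover have "a*b \<le> a*a" using ab apos by simp
    ultimately show False using F3 True big by simp
  next
    case False
    have "\<bar>rb\<bar> < \<bar>c\<bar>" using rb_small[OF False] apos by (simp add: mult.commute)
    hence pos: "c*(c - rb) > 0" by (cases c "0::real" rule: linorder_cases) (auto simp: zero_less_mult_iff)
    have "(c*(c-rb))*((c-ra)*(c-rc)) = (c*c)*(c^2 - c*u + v - a*b)"
      using polygon_factor_real(3)[OF u v d] by (simp add: ac_simps)
    also have "\<dots> \<le> 0" using F3 by (simp add: mult_nonneg_nonpos)
    finally have "(c-ra)*(c-rc) \<le> 0" using mult_le_cancel_left_pos[OF pos, of _ 0] by simp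
    moreover have "(c-ra)*(c-rc) \<ge> 0" using ra rc ab bc by (intro mult_nonpos_nonpos) auto
    ultimately have "(c-ra)*(c-rc) = 0" by linarith
    moreover have "c - ra \<noteq> 0" using ra ab bc by linarith
    ultimately have "c = rc" by simp
    hence abc: "b = a" "c = a" using rc ab bc by auto
    hence prod: "ra*rb = a*a" using d \<open>c = rc\<close> apos by (simp add: ac_simps)
    have "ra + rb \<le> 2*a" using F5 u abc \<open>c = rc\<close> by simp
    hence "ra*(ra + rb) \<le> ra*(2*a)" using ra apos by (intro mult_left_mono) auto
    hence "(ra - a)^2 \<le> 0" using prod by (simp add: power2_eq_square algebra_simps)
    thus False using ra by simp
  qed
qed


text \<open>If a = 0 the polygon degenerates to the point u = v = 0, forcing all roots to vanish.\<close>

lemma real_roots_zero: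
  fixes a b c ra rb rc u v :: real
  assumes ab: "a \<ge> b" and bc: "b \<ge> \<bar>c\<bar>" and a0: "a = 0"
    and u: "u = ra+rb+rc" and v: "v = ra*rb+ra*rc+rb*rc" and F: "polygon a b c u v"
  shows "ra = 0 \<and> rb = 0 \<and> rc = 0"
proof -
  have "b = 0" "c = 0" using ab bc a0 by auto
  hence "v = 0" "u = 0" using F a0 unfolding polygon_def by auto
  moreover have "ra^2 + rb^2 + rc^2 = u^2 - 2*v" unfolding u v by (simp add: algebra_simps power2_eq_square)
  ultimately have "ra^2 + rb^2 + rc^2 = 0" by simp
  thus ?thesis by (simp add: add_nonneg_eq_0_iff)
qed

text \<open>Hence every real eigenvalue is at most a: if ra > a, the condition at a forces one of the
  other two eigenvalues to be at least a, which the previous lemma excludes.\<close>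

lemma real_root_le_top:
  fixes a b c ra rb rc u v :: real
  assumes ab: "a \<ge> b" and bc: "b \<ge> \<bar>c\<bar>"
    and u: "u = ra+rb+rc" and v: "v = ra*rb+ra*rc+rb*rc" and d: "ra*rb*rc = a*b*c"
    and F: "polygon a b c u v"
  shows "ra \<le> a"
proof (rule ccontr)
  assume "\<not> ra \<le> a" hence ra: "ra > a" by simp
  show False
  proof (cases "a = 0")
    case True thus False using real_roots_zero[OF ab bc True u v F] ra by simp
  next
    case False
    hence apos: "a > 0" using ab bc by linarith
    have "a*(a^2 - a*u + v - b*c) \<ge> 0" using F apos unfolding polygon_def by simp
    hence "(a-ra)*((a-rb)*(a-rc)) \<ge> 0" unfolding polygon_factor_real(1)[OF u v d] by (simp add: mult.assoc)
    hence "(a-rb)*(a-rc) \<le> 0" using ra by (simp add: zero_le_mult_iff)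
    hence "a \<le> rc \<or> a \<le> rb" by (auto simp: mult_le_0_iff)
    thus False
    proof
      assume "a \<le> rc"
      thus False by (rule real_root_le_top_aux[OF ab bc apos u v d F ra])
    next
      assume "a \<le> rb"
      thus False using u v d by (intro real_root_le_top_aux[OF ab bc apos _ _ _ F ra, of rc rb])
        (simp_all add: ac_simps)
    qed
  qed
qed

text \<open>Applied to all roots and, via polygon_neg, to their negatives: every root lies in [-a, a].\<close>

lemma real_roots_bounded:
  fixes a b c ra rb rc u v :: real
  assumes ab: "a \<ge> b" and bc: "b \<ge> \<bar>c\<bar>"
    and u: "u = ra+rb+rc" and v: "v = ra*rb+ra*rc+rb*rc" and d: "ra*rb*rc = a*b*c"
    and F: "polygon a b c u v"
  shows "\<bar>ra\<bar> \<le> a" "\<bar>rb\<bar> \<le> a" "\<bar>rc\<bar> \<le> a"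
proof -
  have bc': "b \<ge> \<bar>-c\<bar>" using bc by simp
  have R: "\<bar>r\<bar> \<le> a" if "u = r+s+t" "v = r*s+r*t+s*t" "r*s*t = a*b*c" for r s t
    using real_root_le_top[OF ab bc that F]
      real_root_le_top[OF ab bc' _ _ _ polygon_neg[OF F], of "-r" "-s" "-t"] that by simp
  show "\<bar>ra\<bar> \<le> a" by (rule R[OF u v d])
  show "\<bar>rb\<bar> \<le> a" by (rule R[of rb ra rc]) (use u v d in \<open>simp_all add: ac_simps\<close>)
  show "\<bar>rc\<bar> \<le> a" by (rule R[of rc ra rb]) (use u v d in \<open>simp_all add: ac_simps\<close>)
qed

text \<open>The lower bound |r| >= |c| for a real root r, first for c > 0 and roots in the situation
  rb <= c <= rc, where the product of the roots would be too small.\<close>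

lemma real_root_ge_bottom_aux:
  fixes a b c ra rb rc u v :: real
  assumes ab: "a \<ge> b" and bc: "b \<ge> \<bar>c\<bar>" and cpos: "c > 0"
    and u: "u = ra+rb+rc" and v: "v = ra*rb+ra*rc+rb*rc" and d: "ra*rb*rc = a*b*c"
    and F: "polygon a b c u v" and bnd: "\<bar>rc\<bar> \<le> a"
    and ra: "\<bar>ra\<bar> < c" and rb: "rb \<le> c" and rc: "c \<le> rc"
  shows False
proof -
  have "c*(c^2 + c*u + v + a*b) \<ge> 0" using F cpos unfolding polygon_def by simp
  hence "(c+ra)*((c+rb)*(c+rc)) \<ge> 0" unfolding polygon_factor_real(4)[OF u v d] by (simp add: mult.assoc)
  moreover have "c + ra > 0" "c + rc > 0" using ra rc cpos by linarith+
  ultimately have "c + rb \<ge> 0" by (simp add: zero_le_mult_iff)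
  hence rbb: "\<bar>rb\<bar> \<le> c" using rb by linarith
  have "\<bar>ra*rb*rc\<bar> = \<bar>ra\<bar>*(\<bar>rb\<bar>*\<bar>rc\<bar>)" by (simp add: abs_mult)
  also have "\<bar>rb\<bar>*\<bar>rc\<bar> \<le> c*a" using rbb bnd cpos by (intro mult_mono) auto
  hence "\<bar>ra\<bar>*(\<bar>rb\<bar>*\<bar>rc\<bar>) \<le> \<bar>ra\<bar>*(c*a)" by (simp add: mult_left_mono)
  also have "\<bar>ra\<bar>*(c*a) < c*(c*a)" using ra cpos bc ab by (intro mult_strict_right_mono) auto
  also have "c*(c*a) \<le> a*b*c"
  proof -
    have "c*c \<le> b*c" using bc cpos by (intro mult_right_mono) auto
    hence "a*(c*c) \<le> a*(b*c)" using ab bc by (intro mult_left_mono) auto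
    thus ?thesis by (simp add: algebra_simps)
  qed
  finally have "\<bar>ra*rb*rc\<bar> < a*b*c" .
  thus False using d ab bc cpos by simp
qed

text \<open>For c > 0 the condition at c places c between two roots if |ra| < c, which the previous
  lemma excludes.\<close>

lemma real_root_ge_pos_bottom:
  fixes a b c ra rb rc u v :: real
  assumes ab: "a \<ge> b" and bc: "b \<ge> \<bar>c\<bar>" and cpos: "c > 0"
    and u: "u = ra+rb+rc" and v: "v = ra*rb+ra*rc+rb*rc" and d: "ra*rb*rc = a*b*c"
    and F: "polygon a b c u v"
  shows "\<bar>ra\<bar> \<ge> c"
proof (rule ccontr)
  assume "\<not> \<bar>ra\<bar> \<ge> c" hence ra: "\<bar>ra\<bar> < c" by simp
  note bnds = real_roots_bounded[OF ab bc u v d F]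
  have "c*(c^2 - c*u + v - a*b) \<le> 0" using F cpos unfolding polygon_def by (simp add: mult_nonneg_nonpos)
  hence "(c-ra)*((c-rb)*(c-rc)) \<le> 0" unfolding polygon_factor_real(3)[OF u v d] by (simp add: mult.assoc)
  moreover have "c - ra > 0" using ra by linarith
  ultimately have "(c-rb)*(c-rc) \<le> 0" by (simp add: mult_le_0_iff)
  hence "(rb \<le> c \<and> c \<le> rc) \<or> (rc \<le> c \<and> c \<le> rb)" by (auto simp: mult_le_0_iff)
  thus False
  proof
    assume h: "rb \<le> c \<and> c \<le> rc"
    show False by (rule real_root_ge_bottom_aux[OF ab bc cpos u v d F]) (use h bnds ra in auto)
  next
    assume h: "rc \<le> c \<and> c \<le> rb"
    show False by (rule real_root_ge_bottom_aux[where ra=ra and rb=rc and rc=rb, OF ab bc cpos _ _ _ F])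
      (use h bnds ra u v d in \<open>auto simp: algebra_simps\<close>)
  qed
qed

lemma real_root_ge_bottom:
  fixes a b c ra rb rc u v :: real
  assumes ab: "a \<ge> b" and bc: "b \<ge> \<bar>c\<bar>" and cnz: "c \<noteq> 0"
    and u: "u = ra+rb+rc" and v: "v = ra*rb+ra*rc+rb*rc" and d: "ra*rb*rc = a*b*c"
    and F: "polygon a b c u v"
  shows "\<bar>ra\<bar> \<ge> \<bar>c\<bar>"
proof (cases "c > 0")
  case True thus ?thesis using real_root_ge_pos_bottom[OF ab bc True u v d F] by simp
next
  case False
  hence "-c > 0" using cnz by simp
  moreover have "b \<ge> \<bar>-c\<bar>" using bc by simp
  ultimately have "\<bar>-ra\<bar> \<ge> -c"
    using real_root_ge_pos_bottom[OF ab _ _ _ _ _ polygon_neg[OF F], of "-ra" "-rb" "-rc"] u v d by auto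
  thus ?thesis using False by simp
qed


definition weyl_real :: "real \<Rightarrow> real \<Rightarrow> real \<Rightarrow> real \<Rightarrow> real \<Rightarrow> bool" where
  "weyl_real a b ra rb rc \<longleftrightarrow> \<bar>ra\<bar> \<le> a \<and> \<bar>rb\<bar> \<le> a \<and> \<bar>rc\<bar> \<le> a
     \<and> \<bar>ra*rb\<bar> \<le> a*b \<and> \<bar>ra*rc\<bar> \<le> a*b \<and> \<bar>rb*rc\<bar> \<le> a*b"

lemma pair_bound_from_third:
  fixes a b c x y z :: real
  assumes d: "\<bar>x*y*z\<bar> = a*b*\<bar>c\<bar>" and z: "\<bar>z\<bar> \<ge> \<bar>c\<bar>" and c: "c \<noteq> 0" and ab: "a*b \<ge> 0"
  shows "\<bar>x*y\<bar> \<le> a*b"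
proof -
  have zp: "\<bar>z\<bar> > 0" using z c by linarith
  have "\<bar>x*y\<bar>*\<bar>z\<bar> = a*b*\<bar>c\<bar>" using d by (simp add: abs_mult)
  also have "\<dots> \<le> a*b*\<bar>z\<bar>" using z ab by (simp add: mult_left_mono)
  finally show ?thesis using zp by simp
qed

lemma third_bound_from_pair:
  fixes a b c x y z :: real
  assumes d: "\<bar>x*y*z\<bar> = a*b*\<bar>c\<bar>" and p: "\<bar>x*y\<bar> \<le> a*b" and ab: "a*b > 0"
  shows "\<bar>z\<bar> \<ge> \<bar>c\<bar>"
proof (rule ccontr)
  assume "\<not> ?thesis" hence zc: "\<bar>z\<bar> < \<bar>c\<bar>" by simp
  have "\<bar>x*y\<bar>*\<bar>z\<bar> \<le> a*b*\<bar>z\<bar>" using p by (simp add: mult_right_mono)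
  also have "\<dots> < a*b*\<bar>c\<bar>" by (rule mult_strict_left_mono[OF zc ab])
  finally show False using d by (simp add: abs_mult)
qed

text \<open>On the polygon a real spectrum satisfies the bounds: the moduli are at most a, and each
  pairwise product is at most a b because the remaining factor has modulus at least |c|.\<close>

lemma polygon_imp_weyl_real:
  fixes a b c ra rb rc u v :: real
  assumes ab: "a \<ge> b" and bc: "b \<ge> \<bar>c\<bar>"
    and u: "u = ra+rb+rc" and v: "v = ra*rb+ra*rc+rb*rc" and d: "ra*rb*rc = a*b*c"
    and F: "polygon a b c u v"
  shows "weyl_real a b ra rb rc"
proof -
  have abn: "a*b \<ge> 0" using ab bc by simp
  have da: "\<bar>ra*rb*rc\<bar> = a*b*\<bar>c\<bar>" using d ab bc by (simp add: abs_mult)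
  have "\<bar>ra*rb\<bar> \<le> a*b \<and> \<bar>ra*rc\<bar> \<le> a*b \<and> \<bar>rb*rc\<bar> \<le> a*b"
  proof (cases "c = 0")
    case False
    have "\<bar>ra\<bar> \<ge> \<bar>c\<bar>" by (rule real_root_ge_bottom[OF ab bc False u v d F])
    moreover have "\<bar>rb\<bar> \<ge> \<bar>c\<bar>"
      by (rule real_root_ge_bottom[where ra=rb and rb=ra and rc=rc, OF ab bc False _ _ _ F])
         (use u v d in \<open>simp_all add: ac_simps\<close>)
    moreover have "\<bar>rc\<bar> \<ge> \<bar>c\<bar>"
      by (rule real_root_ge_bottom[where ra=rc and rb=ra and rc=rb, OF ab bc False _ _ _ F])
         (use u v d in \<open>simp_all add: ac_simps\<close>)
    moreover have "\<bar>ra*rc*rb\<bar> = a*b*\<bar>c\<bar>" "\<bar>rb*rc*ra\<bar> = a*b*\<bar>c\<bar>" using da by (simp_all add: ac_simps)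
    ultimately show ?thesis
      using pair_bound_from_third[OF da _ False abn] pair_bound_from_third[OF _ _ False abn] by blast
  next
    case True
    hence "v \<le> a*b" and "-(a*b) \<le> v" using F unfolding polygon_def by auto
    moreover have "ra = 0 \<or> rb = 0 \<or> rc = 0" using d True by simp
    ultimately show ?thesis using abn v by auto
  qed
  thus ?thesis unfolding weyl_real_def using real_roots_bounded[OF ab bc u v d F] by auto
qed

lemma root_outside_signs:
  fixes c r :: real
  assumes "\<bar>r\<bar> \<ge> \<bar>c\<bar>"
  shows "(c - r)*r \<le> 0" "(c + r)*r \<ge> 0"
proof -
  have "\<bar>c\<bar>*\<bar>r\<bar> \<le> r*r" using assms by (metis abs_mult_self_eq mult_right_mono abs_ge_zero)
  moreover have "c*r \<le> \<bar>c\<bar>*\<bar>r\<bar>" "-(c*r) \<le> \<bar>c\<bar>*\<bar>r\<bar>" by (metis abs_ge_self abs_mult, metis abs_ge_minus_self abs_mult)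
  ultimately show "(c - r)*r \<le> 0" "(c + r)*r \<ge> 0" by (simp_all add: algebra_simps)
qed

text \<open>When all roots have modulus at least |c|, the two conditions at c hold: multiply the
  factorisations by the product of the roots, which has the sign of c.\<close>

lemma real_conditions_at_c:
  fixes a b c ra rb rc u v :: real
  assumes u: "u = ra+rb+rc" and v: "v = ra*rb+ra*rc+rb*rc" and d: "ra*rb*rc = a*b*c"
    and abp: "a*b > 0" and c: "c \<noteq> 0"
    and ge: "\<bar>ra\<bar> \<ge> \<bar>c\<bar>" "\<bar>rb\<bar> \<ge> \<bar>c\<bar>" "\<bar>rc\<bar> \<ge> \<bar>c\<bar>"
  shows "c^2 - c*u + v - a*b \<le> 0" "0 \<le> c^2 + c*u + v + a*b"
proof -
  note E = polygon_factor_real[OF u v d]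
  have P: "a*b*(c*c) > 0" using abp c not_real_square_gt_zero mult_pos_pos by blast
  have "(c^2 - c*u + v - a*b)*(a*b*(c*c)) = (c*(c^2 - c*u + v - a*b))*(ra*rb*rc)"
    unfolding d by (simp add: ac_simps)
  also have "\<dots> = ((c-ra)*ra)*((c-rb)*rb)*((c-rc)*rc)" unfolding E(3) by (simp add: ac_simps)
  also have "\<dots> \<le> 0" using ge by (intro mult_nonneg_nonpos mult_nonpos_nonpos root_outside_signs)
  finally show "c^2 - c*u + v - a*b \<le> 0" using mult_le_cancel_right_pos[OF P, of _ 0] by simp
  have "(c^2 + c*u + v + a*b)*(a*b*(c*c)) = (c*(c^2 + c*u + v + a*b))*(ra*rb*rc)"
    unfolding d by (simp add: ac_simps)
  also have "\<dots> = ((c+ra)*ra)*((c+rb)*rb)*((c+rc)*rc)" unfolding E(4) by (simp add: ac_simps)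
  also have "\<dots> \<ge> 0" using ge by (intro mult_nonneg_nonneg root_outside_signs)
  finally show "0 \<le> c^2 + c*u + v + a*b" using mult_le_cancel_right_pos[OF P, of 0] by simp
qed

text \<open>Conversely, the bounds imply the polygon conditions: at a the factorisation is a product of
  nonnegative factors, and at c the previous lemma applies.\<close>

lemma weyl_real_imp_polygon:
  fixes a b c ra rb rc u v :: real
  assumes ab: "a \<ge> b" and bc: "b \<ge> \<bar>c\<bar>"
    and u: "u = ra+rb+rc" and v: "v = ra*rb+ra*rc+rb*rc" and d: "ra*rb*rc = a*b*c"
    and W: "weyl_real a b ra rb rc"
  shows "polygon a b c u v"
proof -
  note E = polygon_factor_real[OF u v d]
  have bnd: "\<bar>ra\<bar> \<le> a" "\<bar>rb\<bar> \<le> a" "\<bar>rc\<bar> \<le> a"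
    and pr: "\<bar>ra*rb\<bar> \<le> a*b" "\<bar>ra*rc\<bar> \<le> a*b" "\<bar>rb*rc\<bar> \<le> a*b"
    using W unfolding weyl_real_def by auto
  show ?thesis
  proof (cases "a = 0")
    case True
    hence "ra = 0" "rb = 0" "rc = 0" "b = 0" "c = 0" using bnd ab bc by auto
    thus ?thesis using True u v unfolding polygon_def by simp
  next
    case False
    hence apos: "a > 0" using ab bc by linarith
    have "a*(a^2 - a*u + v - b*c) \<ge> 0" "a*(a^2 + a*u + v + b*c) \<ge> 0"
      unfolding E(1,2) using bnd by (intro mult_nonneg_nonneg; auto)+
    hence F1: "0 \<le> a^2 - a*u + v - b*c" and F2: "0 \<le> a^2 + a*u + v + b*c"
      using apos by (simp_all add: zero_le_mult_iff)
    have F34: "c^2 - c*u + v - a*b \<le> 0 \<and> 0 \<le> c^2 + c*u + v + a*b"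
    proof (cases "c = 0")
      case True
      have "ra = 0 \<or> rb = 0 \<or> rc = 0" using d True by simp
      hence "\<bar>v\<bar> \<le> a*b" using v pr by auto
      thus ?thesis using True by auto
    next
      case False
      have abp: "a*b > 0" using False ab bc by (simp add: mult_pos_pos)
      have da: "\<bar>ra*rb*rc\<bar> = a*b*\<bar>c\<bar>" using d ab bc by (simp add: abs_mult)
      have "\<bar>rc\<bar> \<ge> \<bar>c\<bar>" by (rule third_bound_from_pair[OF da pr(1) abp])
      moreover have "\<bar>rb\<bar> \<ge> \<bar>c\<bar>"
        by (rule third_bound_from_pair[of ra rc rb a b c]) (use da pr abp in \<open>simp_all add: ac_simps\<close>)
      moreover have "\<bar>ra\<bar> \<ge> \<bar>c\<bar>"
        by (rule third_bound_from_pair[of rb rc ra a b c]) (use da pr abp in \<open>simp_all add: ac_simps\<close>)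
      ultimately show ?thesis using real_conditions_at_c[OF u v d abp False] by simp
    qed
    have "\<bar>u\<bar> \<le> 3*a" using u bnd by linarith
    thus ?thesis using polygon_from_cubic_bounds[OF ab bc F1 F2] F34 by simp
  qed
qed

lemma polygon_iff_real_spectrum:
  fixes a b c u v :: real and l0 l1 l2 :: complex
  assumes ab: "a \<ge> b" and bc: "b \<ge> \<bar>c\<bar>"
    and re: "Im l0 = 0" "Im l1 = 0" "Im l2 = 0"
    and e1: "l0+l1+l2 = of_real u" and e2: "l0*l1+l0*l2+l1*l2 = of_real v" and e3: "l0*l1*l2 = of_real (a*b*c)"
  shows "polygon a b c u v \<longleftrightarrow> (cmod l0 \<le> a \<and> cmod l1 \<le> a \<and> cmod l2 \<le> a \<and>
      cmod l0 * cmod l1 \<le> a*b \<and> cmod l0 * cmod l2 \<le> a*b \<and> cmod l1 * cmod l2 \<le> a*b)"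
proof -
  define ra where "ra = Re l0"
  define rb where "rb = Re l1"
  define rc where "rc = Re l2"
  have L: "l0 = of_real ra" "l1 = of_real rb" "l2 = of_real rc" using re unfolding ra_def rb_def rc_def
    by (auto simp: complex_eq_iff)
  have u: "u = ra+rb+rc" using arg_cong[OF e1, of Re] unfolding L by simp
  have v: "v = ra*rb+ra*rc+rb*rc" using arg_cong[OF e2, of Re] unfolding L by simp
  have d: "ra*rb*rc = a*b*c" using arg_cong[OF e3, of Re] unfolding L by simp
  have "polygon a b c u v \<longleftrightarrow> weyl_real a b ra rb rc"
    using polygon_imp_weyl_real[OF ab bc u v d] weyl_real_imp_polygon[OF ab bc u v d] by blast
  also have "\<dots> \<longleftrightarrow> (cmod l0 \<le> a \<and> cmod l1 \<le> a \<and> cmod l2 \<le> a \<and>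
      cmod l0 * cmod l1 \<le> a*b \<and> cmod l0 * cmod l2 \<le> a*b \<and> cmod l1 * cmod l2 \<le> a*b)"
    unfolding weyl_real_def L by (simp add: abs_mult)
  finally show ?thesis .
qed


subsection \<open>A conjugate pair\<close>

text \<open>Since the quadratic factors are positive, each of the four polygon conditions becomes a
  condition on the real eigenvalue r alone.\<close>

lemma pair_conditions:
  fixes a b c x y r u v :: real
  assumes u: "u = 2*x + r" and v: "v = x^2 + y^2 + 2*x*r" and d: "(x^2+y^2)*r = a*b*c"
    and y: "y \<noteq> 0"
  shows "a > 0 \<Longrightarrow> 0 \<le> a^2 - a*u + v - b*c \<longleftrightarrow> r \<le> a"
    "a > 0 \<Longrightarrow> 0 \<le> a^2 + a*u + v + b*c \<longleftrightarrow> -a \<le> r"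
    "c \<noteq> 0 \<Longrightarrow> c^2 - c*u + v - a*b \<le> 0 \<longleftrightarrow> c*c \<le> c*r"
    "c \<noteq> 0 \<Longrightarrow> c*c \<le> c*r \<Longrightarrow> 0 \<le> c^2 + c*u + v + a*b"
proof -
  note E = polygon_factor_pair[OF u v d]
  have G: "(t - x)^2 + y^2 > 0" "(t + x)^2 + y^2 > 0" for t using y by (simp_all add: add_nonneg_pos)
  show "0 \<le> a^2 - a*u + v - b*c \<longleftrightarrow> r \<le> a" if "a > 0"
  proof -
    have "0 \<le> a^2 - a*u + v - b*c \<longleftrightarrow> 0 \<le> (a-r)*((a-x)^2+y^2)"
      unfolding E(1)[symmetric] using that by (simp add: zero_le_mult_iff)
    thus ?thesis using G(1)[of a] by (simp add: zero_le_mult_iff)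
  qed
  show "0 \<le> a^2 + a*u + v + b*c \<longleftrightarrow> -a \<le> r" if "a > 0"
  proof -
    have "0 \<le> a^2 + a*u + v + b*c \<longleftrightarrow> 0 \<le> (a+r)*((a+x)^2+y^2)"
      unfolding E(2)[symmetric] using that by (simp add: zero_le_mult_iff)
    thus ?thesis using G(2)[of a] by (auto simp: zero_le_mult_iff)
  qed
  show "c^2 - c*u + v - a*b \<le> 0 \<longleftrightarrow> c*c \<le> c*r" if "c \<noteq> 0"
  proof -
    have cc: "c*c > 0" using that not_real_square_gt_zero by blast
    have "c^2 - c*u + v - a*b \<le> 0 \<longleftrightarrow> (c*c)*(c^2 - c*u + v - a*b) \<le> 0"
      using mult_le_cancel_left_pos[OF cc, of _ 0] by simp
    also have "(c*c)*(c^2 - c*u + v - a*b) = (c*(c-r))*((c-x)^2+y^2)"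
      using E(3) by (simp add: ac_simps)
    also have "\<dots> \<le> 0 \<longleftrightarrow> c*(c-r) \<le> 0" using G(1)[of c] by (simp add: mult_le_0_iff)
    finally show ?thesis by (simp add: algebra_simps)
  qed
  show "0 \<le> c^2 + c*u + v + a*b" if "c \<noteq> 0" "c*c \<le> c*r"
  proof -
    have cc: "c*c > 0" using that not_real_square_gt_zero by blast
    have "0 \<le> c*(c+r)" using that cc by (simp add: algebra_simps)
    hence "0 \<le> (c*(c+r))*((c+x)^2+y^2)" using G(2)[of c] by simp
    also have "(c*(c+r))*((c+x)^2+y^2) = (c*c)*(c^2 + c*u + v + a*b)"
      using E(4) by (simp add: ac_simps)
    finally show ?thesis using cc by (simp add: zero_le_mult_iff)
  qed
qed

definition weyl_pair :: "real \<Rightarrow> real \<Rightarrow> real \<Rightarrow> real \<Rightarrow> real \<Rightarrow> bool" where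
  "weyl_pair a b x y r \<longleftrightarrow> x^2+y^2 \<le> a^2 \<and> \<bar>r\<bar> \<le> a \<and> x^2+y^2 \<le> a*b \<and> (x^2+y^2)*r^2 \<le> (a*b)^2"

text \<open>On the polygon a spectrum x +- i y, r satisfies the bounds; the conditions at c give
  |r| >= |c|, hence x^2 + y^2 <= a b by the determinant.\<close>

lemma polygon_imp_weyl_pair:
  fixes a b c x y r u v :: real
  assumes ab: "a \<ge> b" and bc: "b \<ge> \<bar>c\<bar>" and y: "y \<noteq> 0"
    and u: "u = 2*x + r" and v: "v = x^2 + y^2 + 2*x*r" and d: "(x^2+y^2)*r = a*b*c"
    and F: "polygon a b c u v"
  shows "weyl_pair a b x y r"
proof -
  note C = pair_conditions[OF u v d y]
  have r2p: "x^2+y^2 > 0" using y by (simp add: add_nonneg_pos)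
  have F1: "0 \<le> a^2 - a*u + v - b*c" and F2: "0 \<le> a^2 + a*u + v + b*c"
    and F3: "c^2 - c*u + v - a*b \<le> 0" using F unfolding polygon_def by auto
  have abn: "a*b \<ge> 0" using ab bc by simp
  have apos: "a > 0"
  proof (rule ccontr)
    assume "\<not> a > 0" hence z: "a = 0" "b = 0" "c = 0" using ab bc by auto
    hence "r = 0" using d r2p by (metis mult_eq_0_iff mult_zero_right less_irrefl)
    thus False using F1 F3 z v r2p by simp
  qed
  have ra: "\<bar>r\<bar> \<le> a" using C(1)[OF apos] C(2)[OF apos] F1 F2 by linarith
  have "x^2+y^2 \<le> a*b \<and> (x^2+y^2)*r^2 \<le> (a*b)^2"
  proof (cases "c = 0")
    case True
    hence "r = 0" using d r2p by (metis mult_eq_0_iff mult_zero_right less_irrefl)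
    thus ?thesis using F3 True v abn by simp
  next
    case False
    hence "c*c \<le> c*r" using C(3) F3 by blast
    hence rc: "\<bar>c\<bar> \<le> \<bar>r\<bar>" using False
      by (cases c "0::real" rule: linorder_cases) (auto simp: mult_le_cancel_left)
    have dd: "(x^2+y^2)*\<bar>r\<bar> = a*b*\<bar>c\<bar>"
      using arg_cong[OF d, of abs] r2p abn ab bc by (simp add: abs_mult)
    have "(x^2+y^2)*\<bar>r\<bar> \<le> a*b*\<bar>r\<bar>" unfolding dd using rc abn by (simp add: mult_left_mono)
    moreover have "\<bar>r\<bar> > 0" using rc False by linarith
    ultimately have q1: "x^2+y^2 \<le> a*b" by simp
    have "(x^2+y^2)*r^2 = (a*b*\<bar>c\<bar>)*\<bar>r\<bar>" unfolding dd[symmetric] by (simp add: power2_eq_square)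
    also have "\<dots> \<le> (a*b*b)*a" using bc ra abn ab by (intro mult_mono mult_left_mono) auto
    also have "\<dots> = (a*b)^2" by (simp add: power2_eq_square)
    finally show ?thesis using q1 by simp
  qed
  moreover have "a*b \<le> a^2" using ab apos by (simp add: power2_eq_square)
  ultimately show ?thesis unfolding weyl_pair_def using ra by simp
qed

text \<open>Conversely the bounds give |r| >= |c| and c r > 0 through the determinant, which yields the
  conditions at c.\<close>

lemma weyl_pair_imp_polygon:
  fixes a b c x y r u v :: real
  assumes ab: "a \<ge> b" and bc: "b \<ge> \<bar>c\<bar>" and y: "y \<noteq> 0"
    and u: "u = 2*x + r" and v: "v = x^2 + y^2 + 2*x*r" and d: "(x^2+y^2)*r = a*b*c"
    and W: "weyl_pair a b x y r"
  shows "polygon a b c u v"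
proof -
  note C = pair_conditions[OF u v d y]
  have r2p: "x^2+y^2 > 0" using y by (simp add: add_nonneg_pos)
  have w1: "x^2+y^2 \<le> a^2" and ra: "\<bar>r\<bar> \<le> a" and w3: "x^2+y^2 \<le> a*b"
    using W unfolding weyl_pair_def by auto
  have an: "a \<ge> 0" "b \<ge> 0" using ab bc by auto
  have apos: "a > 0" using w1 r2p an by (cases "a = 0") auto
  have F34: "c^2 - c*u + v - a*b \<le> 0 \<and> 0 \<le> c^2 + c*u + v + a*b"
  proof (cases "c = 0")
    case True
    hence "r = 0" using d r2p by (metis mult_eq_0_iff mult_zero_right less_irrefl)
    thus ?thesis using True v w3 an by simp
  next
    case False
    have abp: "a*b > 0" using False ab bc by simp
    have "(x^2+y^2)*(c*r) = a*b*(c*c)" using arg_cong[OF d, of "\<lambda>t. c*t"] by (simp add: ac_simps)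
    moreover have "a*b*(c*c) > 0" using abp False not_real_square_gt_zero mult_pos_pos by blast
    ultimately have crp: "c*r > 0" using r2p by (metis zero_less_mult_iff not_less_iff_gr_or_eq)
    have dd: "(x^2+y^2)*\<bar>r\<bar> = a*b*\<bar>c\<bar>"
      using arg_cong[OF d, of abs] r2p an by (simp add: abs_mult)
    have "a*b*\<bar>c\<bar> \<le> a*b*\<bar>r\<bar>" unfolding dd[symmetric] using w3 by (simp add: mult_right_mono)
    hence "\<bar>c\<bar> \<le> \<bar>r\<bar>" using mult_le_cancel_left_pos[OF abp] by blast
    hence "c*c \<le> c*r" using crp
      by (cases c "0::real" rule: linorder_cases) (auto simp: mult_le_cancel_left zero_less_mult_iff)
    thus ?thesis using C(3)[OF False] C(4)[OF False] by blast
  qed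
  have "x^2 \<le> a^2" using w1 zero_le_power2[of y] by linarith
  hence "\<bar>x\<bar> \<le> a" using an abs_le_square_iff[of x a] by simp
  hence "\<bar>u\<bar> \<le> 3*a" using u ra by linarith
  thus ?thesis
    using polygon_from_cubic_bounds[OF ab bc _ _ _ _] C(1)[OF apos] C(2)[OF apos] ra F34 by simp
qed

lemma polygon_iff_pair_spectrum:
  fixes a b c u v :: real and z w :: complex
  assumes ab: "a \<ge> b" and bc: "b \<ge> \<bar>c\<bar>" and y: "Im z \<noteq> 0"
    and re: "Im w = 0"
    and e1: "z + cnj z + w = of_real u" and e2: "z*cnj z + z*w + cnj z*w = of_real v" and e3: "z*cnj z*w = of_real (a*b*c)"
  shows "polygon a b c u v \<longleftrightarrow> (cmod z \<le> a \<and> cmod (cnj z) \<le> a \<and> cmod w \<le> a \<and>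
      cmod z * cmod (cnj z) \<le> a*b \<and> cmod z * cmod w \<le> a*b \<and> cmod (cnj z) * cmod w \<le> a*b)"
proof -
  define x where "x = Re z"
  define yy where "yy = Im z"
  define r where "r = Re w"
  have Z: "z = Complex x yy" unfolding x_def yy_def by simp
  have Wr: "w = of_real r" using re unfolding r_def by (simp add: complex_eq_iff)
  have y': "yy \<noteq> 0" using y unfolding yy_def .
  have u: "u = 2*x + r" using arg_cong[OF e1, of Re] unfolding Z Wr by simp
  have v: "v = x^2 + yy^2 + 2*x*r" using arg_cong[OF e2, of Re] unfolding Z Wr by (simp add: power2_eq_square algebra_simps)
  have d: "(x^2+yy^2)*r = a*b*c" using arg_cong[OF e3, of Re] unfolding Z Wr by (simp add: power2_eq_square algebra_simps)
  have an: "a \<ge> 0" "b \<ge> 0" using ab bc by auto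
  have cz: "cmod z = sqrt (x^2+yy^2)" "cmod (cnj z) = sqrt (x^2+yy^2)" unfolding Z by (simp_all add: cmod_def)
  have cw: "cmod w = \<bar>r\<bar>" unfolding Wr by simp
  have sq: "sqrt (x^2+yy^2) * sqrt (x^2+yy^2) = x^2+yy^2" by simp
  have i1: "sqrt (x^2+yy^2) \<le> a \<longleftrightarrow> x^2+yy^2 \<le> a^2" using an sqrt_le_D real_le_lsqrt by blast
  have i2: "sqrt (x^2+yy^2) * \<bar>r\<bar> \<le> a*b \<longleftrightarrow> (x^2+yy^2)*r^2 \<le> (a*b)^2"
  proof -
    have "(sqrt (x^2+yy^2) * \<bar>r\<bar>)^2 \<le> (a*b)^2 \<longleftrightarrow> \<bar>sqrt (x^2+yy^2) * \<bar>r\<bar>\<bar> \<le> a*b"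
      by (rule power2_le_iff_abs_le) (use an in simp)
    hence "sqrt (x^2+yy^2) * \<bar>r\<bar> \<le> a*b \<longleftrightarrow> (sqrt (x^2+yy^2) * \<bar>r\<bar>)^2 \<le> (a*b)^2" by simp
    also have "(sqrt (x^2+yy^2) * \<bar>r\<bar>)^2 = (x^2+yy^2)*r^2" by (simp add: power_mult_distrib)
    finally show ?thesis .
  qed
  have "polygon a b c u v \<longleftrightarrow> weyl_pair a b x yy r"
    using polygon_imp_weyl_pair[OF ab bc y' u v d] weyl_pair_imp_polygon[OF ab bc y' u v d] by blast
  also have "\<dots> \<longleftrightarrow> (cmod z \<le> a \<and> cmod (cnj z) \<le> a \<and> cmod w \<le> a \<and>
      cmod z * cmod (cnj z) \<le> a*b \<and> cmod z * cmod w \<le> a*b \<and> cmod (cnj z) * cmod w \<le> a*b)"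
    unfolding weyl_pair_def cz cw sq i1 i2 by (auto simp: mult.commute)
  finally show ?thesis .
qed



section \<open>Conjugation-invariant triples\<close>

lemma cnj_cubic_with_real_coefficients:
  fixes l0 l1 l2 w :: complex
  assumes e1: "Im (l0+l1+l2) = 0" and e2: "Im (l0*l1+l0*l2+l1*l2) = 0" and e3: "Im (l0*l1*l2) = 0"
  shows "(cnj w - l0)*(cnj w - l1)*(cnj w - l2) = cnj ((w - l0)*(w - l1)*(w - l2))"
proof -
  define E1 where "E1 = l0+l1+l2"
  define E2 where "E2 = l0*l1+l0*l2+l1*l2"
  define E3 where "E3 = l0*l1*l2"
  have "Im E1 = 0" "Im E2 = 0" "Im E3 = 0" using e1 e2 e3 unfolding E1_def E2_def E3_def .
  hence c: "cnj E1 = E1" "cnj E2 = E2" "cnj E3 = E3" by (metis Reals_cnj_iff complex_is_Real_iff)+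
  have "(cnj w - l0)*(cnj w - l1)*(cnj w - l2) = cnj w^3 - E1 * cnj w^2 + E2 * cnj w - E3"
    unfolding E1_def E2_def E3_def by (simp add: algebra_simps power2_eq_square power3_eq_cube)
  also have "\<dots> = cnj (w^3 - cnj E1 * w^2 + cnj E2 * w - cnj E3)" by simp
  also have "\<dots> = cnj (w^3 - E1 * w^2 + E2 * w - E3)" using c by simp
  also have "w^3 - E1 * w^2 + E2 * w - E3 = (w - l0)*(w - l1)*(w - l2)"
    unfolding E1_def E2_def E3_def by (simp add: algebra_simps power2_eq_square power3_eq_cube)
  finally show ?thesis .
qed

definition conj_closed3 :: "complex \<Rightarrow> complex \<Rightarrow> complex \<Rightarrow> bool" where
  "conj_closed3 l0 l1 l2 \<longleftrightarrow> (Im l0 = 0 \<and> Im l1 = 0 \<and> Im l2 = 0) \<or> (l1 = cnj l0 \<and> Im l2 = 0)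
     \<or> (l2 = cnj l0 \<and> Im l1 = 0) \<or> (l2 = cnj l1 \<and> Im l0 = 0)"

lemma real_coefficients_imp_conj_closed3:
  fixes l0 l1 l2 :: complex
  assumes e1: "Im (l0+l1+l2) = 0" and e2: "Im (l0*l1+l0*l2+l1*l2) = 0" and e3: "Im (l0*l1*l2) = 0"
  shows "conj_closed3 l0 l1 l2"
proof -
  note R = cnj_cubic_with_real_coefficients[OF e1 e2 e3]
  show ?thesis
  proof (cases "Im l0 = 0")
    case False
    have "(cnj l0 - l0)*(cnj l0 - l1)*(cnj l0 - l2) = 0" using R[of l0] by simp
    moreover have "cnj l0 - l0 \<noteq> 0" using False by (simp add: complex_eq_iff)
    ultimately have "cnj l0 = l1 \<or> cnj l0 = l2" by simp
    thus ?thesis using e1 unfolding conj_closed3_def by (auto simp: complex_eq_iff)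
  next
    case T0: True
    show ?thesis
    proof (cases "Im l1 = 0")
      case True
      thus ?thesis using e1 T0 unfolding conj_closed3_def by simp
    next
      case False
      have "(cnj l1 - l0)*(cnj l1 - l1)*(cnj l1 - l2) = 0" using R[of l1] by simp
      moreover have "cnj l1 - l1 \<noteq> 0" "cnj l1 \<noteq> l0" using False T0 by (auto simp: complex_eq_iff)
      ultimately have "cnj l1 = l2" by simp
      thus ?thesis unfolding conj_closed3_def using T0 by auto
    qed
  qed
qed

text \<open>A conjugation-invariant multiset has real elementary symmetric functions; for the middle
  one evaluate the (invariant) product of the 1 - l_i.\<close>

lemma conj_invariant_imp_real_coefficients:
  fixes l0 l1 l2 :: complex
  assumes H: "image_mset cnj (mset [l0, l1, l2]) = mset [l0, l1, l2]"
  shows "Im (l0+l1+l2) = 0" "Im (l0*l1+l0*l2+l1*l2) = 0" "Im (l0*l1*l2) = 0"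
proof -
  have s: "cnj l0 + cnj l1 + cnj l2 = l0 + l1 + l2"
    using arg_cong[OF H, of sum_mset] by (simp add: ac_simps)
  have p: "cnj (l0 * l1 * l2) = l0 * l1 * l2"
    using arg_cong[OF H, of prod_mset] by (simp add: ac_simps)
  have q: "cnj ((1 - l0) * (1 - l1) * (1 - l2)) = (1 - l0) * (1 - l1) * (1 - l2)"
    using arg_cong[OF H, of "\<lambda>M. prod_mset (image_mset (\<lambda>z. 1 - z) M)"] by (simp add: ac_simps)
  show i1: "Im (l0+l1+l2) = 0" using s by (simp add: complex_eq_iff)
  show i3: "Im (l0*l1*l2) = 0" using p by (metis Reals_cnj_iff complex_is_Real_iff)
  have "Im ((1 - l0) * (1 - l1) * (1 - l2)) = 0" using q by (metis Reals_cnj_iff complex_is_Real_iff)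
  moreover have "(1 - l0) * (1 - l1) * (1 - l2) = 1 - (l0+l1+l2) + (l0*l1+l0*l2+l1*l2) - l0*l1*l2"
    by (simp add: algebra_simps)
  ultimately show "Im (l0*l1+l0*l2+l1*l2) = 0" using i1 i3 by simp
qed

lemma conj_closed3_imp_conj_invariant:
  assumes "conj_closed3 l0 l1 l2"
  shows "image_mset cnj (mset [l0, l1, l2]) = mset [l0, l1, l2]"
proof -
  have r: "Im z = 0 \<Longrightarrow> cnj z = z" for z by (simp add: complex_eq_iff)
  from assms show ?thesis unfolding conj_closed3_def
    by (elim disjE conjE) (simp_all add: r add_mset_commute)
qed


section \<open>Descending reorderings\<close>

definition max3 :: "real \<Rightarrow> real \<Rightarrow> real \<Rightarrow> real" where
  "max3 x y z = max x (max y z)"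

lemma permutes3_cases:
  assumes "\<sigma> permutes {0::nat,1,2}"
  shows "(\<sigma> 0 = 0 \<and> \<sigma> 1 = 1 \<and> \<sigma> 2 = 2) \<or> (\<sigma> 0 = 0 \<and> \<sigma> 1 = 2 \<and> \<sigma> 2 = 1) \<or>
         (\<sigma> 0 = 1 \<and> \<sigma> 1 = 0 \<and> \<sigma> 2 = 2) \<or> (\<sigma> 0 = 1 \<and> \<sigma> 1 = 2 \<and> \<sigma> 2 = 0) \<or>
         (\<sigma> 0 = 2 \<and> \<sigma> 1 = 0 \<and> \<sigma> 2 = 1) \<or> (\<sigma> 0 = 2 \<and> \<sigma> 1 = 1 \<and> \<sigma> 2 = 0)"
proof -
  have "\<sigma> 0 \<le> 2" "\<sigma> 1 \<le> 2" "\<sigma> 2 \<le> 2"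
    using permutes_in_image[OF assms, of 0] permutes_in_image[OF assms, of 1]
      permutes_in_image[OF assms, of 2] by auto
  moreover have "\<sigma> 0 \<noteq> \<sigma> 1" "\<sigma> 0 \<noteq> \<sigma> 2" "\<sigma> 1 \<noteq> \<sigma> 2"
    using permutes_inj[OF assms] by (simp_all add: inj_eq)
  ultimately show ?thesis by presburger
qed

lemma max3_products_sorted:
  fixes x y z :: real
  assumes "x \<ge> y" "y \<ge> z" "z \<ge> 0"
  shows "max3 (x*y) (x*z) (y*z) = x*y"
proof -
  have "x*z \<le> x*y" "z*y \<le> x*y" using assms by (auto intro: mult_left_mono mult_right_mono)
  thus ?thesis unfolding max3_def by (simp add: mult.commute)
qed

lemma desc_reordering_max3:
  fixes f :: "nat \<Rightarrow> real"
  assumes d: "desc_reordering f \<sigma>" and nn: "\<And>i. f i \<ge> 0"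
  shows "f (\<sigma> 0) = max3 (f 0) (f 1) (f 2)"
    "f (\<sigma> 0) * f (\<sigma> 1) = max3 (f 0 * f 1) (f 0 * f 2) (f 1 * f 2)"
proof -
  have p: "\<sigma> permutes {0,1,2}" and s: "f (\<sigma> 0) \<ge> f (\<sigma> 1)" "f (\<sigma> 1) \<ge> f (\<sigma> 2)"
    using d unfolding desc_reordering_def by auto
  have T: "max3 (f (\<sigma> 0) * f (\<sigma> 1)) (f (\<sigma> 0) * f (\<sigma> 2)) (f (\<sigma> 1) * f (\<sigma> 2)) = f (\<sigma> 0) * f (\<sigma> 1)"
    by (rule max3_products_sorted[OF s nn])
  have T2: "max3 (f (\<sigma> 0)) (f (\<sigma> 1)) (f (\<sigma> 2)) = f (\<sigma> 0)" using s unfolding max3_def by simp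
  from permutes3_cases[OF p] show "f (\<sigma> 0) = max3 (f 0) (f 1) (f 2)"
    "f (\<sigma> 0) * f (\<sigma> 1) = max3 (f 0 * f 1) (f 0 * f 2) (f 1 * f 2)"
    by (elim disjE conjE; use T T2 in \<open>simp add: max3_def ac_simps\<close>)+
qed

lemma desc_reordering_exists: "\<exists>\<sigma>. desc_reordering f \<sigma>"
proof -
  have P: "transpose (0::nat) 1 permutes {0,1,2}" "transpose (1::nat) 2 permutes {0,1,2}"
    "transpose (0::nat) 2 permutes {0,1,2}"
    by (auto intro: permutes_swap_id)
  hence P2: "transpose (0::nat) 1 \<circ> transpose 1 2 permutes {0,1,2}"
    "transpose (1::nat) 2 \<circ> transpose 0 1 permutes {0,1,2}"
    by (auto intro: permutes_compose)
  consider "f 0 \<ge> f 1 \<and> f 1 \<ge> f 2" | "f 0 \<ge> f 2 \<and> f 2 \<ge> f 1" | "f 1 \<ge> f 0 \<and> f 0 \<ge> f 2"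
    | "f 1 \<ge> f 2 \<and> f 2 \<ge> f 0" | "f 2 \<ge> f 0 \<and> f 0 \<ge> f 1" | "f 2 \<ge> f 1 \<and> f 1 \<ge> f 0" by linarith
  thus ?thesis
  proof cases
    case 1 thus ?thesis unfolding desc_reordering_def by (intro exI[of _ id]) auto
  next
    case 2 thus ?thesis unfolding desc_reordering_def using P by (intro exI[of _ "transpose 1 2"]) auto
  next
    case 3 thus ?thesis unfolding desc_reordering_def using P by (intro exI[of _ "transpose 0 1"]) auto
  next
    case 4 thus ?thesis unfolding desc_reordering_def using P2
      by (intro exI[of _ "transpose 0 1 \<circ> transpose 1 2"]) auto
  next
    case 5 thus ?thesis unfolding desc_reordering_def using P2
      by (intro exI[of _ "transpose 1 2 \<circ> transpose 0 1"]) auto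
  next
    case 6 thus ?thesis unfolding desc_reordering_def using P by (intro exI[of _ "transpose 0 2"]) auto
  qed
qed

text \<open>The Weyl-type bounds of the theorem, stated without reorderings: the largest modulus and
  the largest product of two moduli of the eigenvalues are dominated by the corresponding
  quantities for the singular values.\<close>

definition spectral_bounds :: "real \<Rightarrow> real \<Rightarrow> real \<Rightarrow> complex \<Rightarrow> complex \<Rightarrow> complex \<Rightarrow> bool" where
  "spectral_bounds x y z l0 l1 l2 \<longleftrightarrow>
     max3 (cmod l0) (cmod l1) (cmod l2) \<le> max3 (\<bar>x\<bar>) (\<bar>y\<bar>) (\<bar>z\<bar>) \<and>
     max3 (cmod l0 * cmod l1) (cmod l0 * cmod l2) (cmod l1 * cmod l2) \<le> max3 (\<bar>x\<bar>*\<bar>y\<bar>) (\<bar>x\<bar>*\<bar>z\<bar>) (\<bar>y\<bar>*\<bar>z\<bar>)"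

lemma descending_conditions_iff_spectral_bounds:
  fixes l :: "nat \<Rightarrow> complex" and s :: "nat \<Rightarrow> real"
  shows "(\<forall>\<sigma> \<tau>. desc_reordering (\<lambda>i. \<bar>s i\<bar>) \<sigma> \<and> desc_reordering (\<lambda>i. cmod (l i)) \<tau> \<longrightarrow>
            \<bar>s (\<sigma> 0) * s (\<sigma> 1)\<bar> \<ge> cmod (l (\<tau> 0) * l (\<tau> 1))
          \<and> \<bar>s (\<sigma> 0)\<bar> \<ge> cmod (l (\<tau> 0)))
    \<longleftrightarrow> spectral_bounds (s 0) (s 1) (s 2) (l 0) (l 1) (l 2)" (is "?desc \<longleftrightarrow> ?bounds")
proof -
  have S: "\<bar>s (\<sigma> 0)\<bar> = max3 (\<bar>s 0\<bar>) (\<bar>s 1\<bar>) (\<bar>s 2\<bar>)"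
      "\<bar>s (\<sigma> 0) * s (\<sigma> 1)\<bar> = max3 (\<bar>s 0\<bar>*\<bar>s 1\<bar>) (\<bar>s 0\<bar>*\<bar>s 2\<bar>) (\<bar>s 1\<bar>*\<bar>s 2\<bar>)"
    if "desc_reordering (\<lambda>i. \<bar>s i\<bar>) \<sigma>" for \<sigma>
    using desc_reordering_max3[OF that] by (simp_all add: abs_mult)
  have L: "cmod (l (\<tau> 0)) = max3 (cmod (l 0)) (cmod (l 1)) (cmod (l 2))"
      "cmod (l (\<tau> 0) * l (\<tau> 1)) = max3 (cmod (l 0)*cmod (l 1)) (cmod (l 0)*cmod (l 2)) (cmod (l 1)*cmod (l 2))"
    if "desc_reordering (\<lambda>i. cmod (l i)) \<tau>" for \<tau>
    using desc_reordering_max3[OF that] by (simp_all add: norm_mult)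
  obtain \<sigma>0 where s0: "desc_reordering (\<lambda>i. \<bar>s i\<bar>) \<sigma>0" using desc_reordering_exists by blast
  obtain \<tau>0 where t0: "desc_reordering (\<lambda>i. cmod (l i)) \<tau>0" using desc_reordering_exists by blast
  show ?thesis
  proof
    assume ?desc
    from this[rule_format, OF conjI[OF s0 t0]] show ?bounds
      unfolding spectral_bounds_def S[OF s0] L[OF t0] by auto
  next
    assume ?bounds
    thus ?desc unfolding spectral_bounds_def using S L by auto
  qed
qed


lemma tetra_image_iff_bounds_sorted:
  fixes a b c u v :: real and l0 l1 l2 :: complex
  assumes ab: "a \<ge> b" and bc: "b \<ge> \<bar>c\<bar>" and N: "conj_closed3 l0 l1 l2"
    and e1: "l0+l1+l2 = of_real u" and e2: "l0*l1+l0*l2+l1*l2 = of_real v"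
    and e3: "l0*l1*l2 = of_real (a*b*c)"
  shows "tetra_image a b c u v \<longleftrightarrow> (cmod l0 \<le> a \<and> cmod l1 \<le> a \<and> cmod l2 \<le> a \<and>
      cmod l0 * cmod l1 \<le> a*b \<and> cmod l0 * cmod l2 \<le> a*b \<and> cmod l1 * cmod l2 \<le> a*b)"
proof -
  have "tetra_image a b c u v \<longleftrightarrow> polygon a b c u v"
    using tetra_image_imp_polygon[OF ab bc] polygon_imp_tetra_image[OF ab bc] by blast
  also have "\<dots> \<longleftrightarrow> (cmod l0 \<le> a \<and> cmod l1 \<le> a \<and> cmod l2 \<le> a \<and>
      cmod l0 * cmod l1 \<le> a*b \<and> cmod l0 * cmod l2 \<le> a*b \<and> cmod l1 * cmod l2 \<le> a*b)"
  proof (cases "Im l0 = 0 \<and> Im l1 = 0 \<and> Im l2 = 0")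
    case True
    thus ?thesis using polygon_iff_real_spectrum[OF ab bc _ _ _ e1 e2 e3] by blast
  next
    case False
    with N consider (c01) "l1 = cnj l0" "Im l2 = 0" "Im l0 \<noteq> 0"
      | (c02) "l2 = cnj l0" "Im l1 = 0" "Im l0 \<noteq> 0" | (c12) "l2 = cnj l1" "Im l0 = 0" "Im l1 \<noteq> 0"
      unfolding conj_closed3_def by auto
    thus ?thesis
    proof cases
      case c01
      show ?thesis using polygon_iff_pair_spectrum[OF ab bc c01(3) c01(2), of u v] e1 e2 e3
        unfolding c01(1) by simp
    next
      case c02
      have "polygon a b c u v \<longleftrightarrow> (cmod l0 \<le> a \<and> cmod (cnj l0) \<le> a \<and> cmod l1 \<le> a \<and>
         cmod l0 * cmod (cnj l0) \<le> a*b \<and> cmod l0 * cmod l1 \<le> a*b \<and> cmod (cnj l0) * cmod l1 \<le> a*b)"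
        by (rule polygon_iff_pair_spectrum[OF ab bc c02(3) c02(2)])
           (use e1 e2 e3 in \<open>simp_all add: c02(1) ac_simps\<close>)
      thus ?thesis unfolding c02(1) by (auto simp: ac_simps)
    next
      case c12
      have "polygon a b c u v \<longleftrightarrow> (cmod l1 \<le> a \<and> cmod (cnj l1) \<le> a \<and> cmod l0 \<le> a \<and>
         cmod l1 * cmod (cnj l1) \<le> a*b \<and> cmod l1 * cmod l0 \<le> a*b \<and> cmod (cnj l1) * cmod l0 \<le> a*b)"
        by (rule polygon_iff_pair_spectrum[OF ab bc c12(3) c12(2)])
           (use e1 e2 e3 in \<open>simp_all add: c12(1) ac_simps\<close>)
      thus ?thesis unfolding c12(1) by (auto simp: ac_simps)
    qed
  qed
  finally show ?thesis .
qed

lemma wlog_signs: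
  fixes P :: "real \<Rightarrow> real \<Rightarrow> real \<Rightarrow> bool"
  assumes S: "\<And>a b c. a \<ge> b \<Longrightarrow> b \<ge> \<bar>c\<bar> \<Longrightarrow> P a b c"
    and sw01: "\<And>x y z. P x y z \<Longrightarrow> P y x z"
    and sw12: "\<And>x y z. P x y z \<Longrightarrow> P x z y"
    and fl: "\<And>x y z. P x y z \<Longrightarrow> P (-x) (-y) z"
    and h: "\<bar>x\<bar> \<ge> \<bar>y\<bar>" "\<bar>y\<bar> \<ge> \<bar>z\<bar>"
  shows "P x y z"
proof -
  have f02: "P (-x) y (-z)" if "P x y z" for x y z using sw12[OF fl[OF sw12[OF that]]] by simp
  have f12: "P x (-y) (-z)" if "P x y z" for x y z using sw01[OF f02[OF sw01[OF that]]] by simp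
  consider "x \<ge> 0" "y \<ge> 0" | "x < 0" "y < 0" | "x < 0" "y \<ge> 0" | "x \<ge> 0" "y < 0" by linarith
  thus ?thesis
  proof cases
    case 1
    thus ?thesis using h by (intro S) auto
  next
    case 2
    hence "P (-x) (-y) z" using h by (intro S) auto
    from fl[OF this] show ?thesis by simp
  next
    case 3
    hence "P (-x) y (-z)" using h by (intro S) auto
    from f02[OF this] show ?thesis by simp
  next
    case 4
    hence "P x (-y) (-z)" using h by (intro S) auto
    from f12[OF this] show ?thesis by simp
  qed
qed

lemma wlog_sorted:
  fixes P :: "real \<Rightarrow> real \<Rightarrow> real \<Rightarrow> bool"
  assumes S: "\<And>a b c. a \<ge> b \<Longrightarrow> b \<ge> \<bar>c\<bar> \<Longrightarrow> P a b c"
    and sw01: "\<And>x y z. P x y z \<Longrightarrow> P y x z"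
    and sw12: "\<And>x y z. P x y z \<Longrightarrow> P x z y"
    and fl: "\<And>x y z. P x y z \<Longrightarrow> P (-x) (-y) z"
  shows "P x y z"
proof -
  have A: "P x y z" if "\<bar>x\<bar> \<ge> \<bar>y\<bar>" "\<bar>y\<bar> \<ge> \<bar>z\<bar>" for x y z
    by (rule wlog_signs[where P=P]) (use S sw01 sw12 fl that in blast)+
  consider "\<bar>x\<bar> \<ge> \<bar>y\<bar>" "\<bar>y\<bar> \<ge> \<bar>z\<bar>" | "\<bar>x\<bar> \<ge> \<bar>z\<bar>" "\<bar>z\<bar> \<ge> \<bar>y\<bar>"
    | "\<bar>y\<bar> \<ge> \<bar>x\<bar>" "\<bar>x\<bar> \<ge> \<bar>z\<bar>" | "\<bar>y\<bar> \<ge> \<bar>z\<bar>" "\<bar>z\<bar> \<ge> \<bar>x\<bar>"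
    | "\<bar>z\<bar> \<ge> \<bar>x\<bar>" "\<bar>x\<bar> \<ge> \<bar>y\<bar>" | "\<bar>z\<bar> \<ge> \<bar>y\<bar>" "\<bar>y\<bar> \<ge> \<bar>x\<bar>"
    by linarith
  thus ?thesis
  proof cases
    case 1 thus ?thesis using A by blast
  next
    case 2 thus ?thesis using sw12[OF A[where x=x and y=z and z=y]] by blast
  next
    case 3 thus ?thesis using sw01[OF A[where x=y and y=x and z=z]] by blast
  next
    case 4 thus ?thesis using sw01[OF sw12[OF A[where x=y and y=z and z=x]]] by blast
  next
    case 5 thus ?thesis using sw12[OF sw01[OF A[where x=z and y=x and z=y]]] by blast
  next
    case 6 thus ?thesis using sw12[OF sw01[OF sw12[OF A[where x=z and y=y and z=x]]]] by blast
  qed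
qed

text \<open>Both sides of the main equivalence have these symmetries: for the tetrahedron image they
  come from the symmetries of the tetrahedron permuting (and changing the signs of) the
  coordinates.\<close>

lemma tetra_image_symmetries:
  "tetra_image y x z u v \<longleftrightarrow> tetra_image x y z u v"
  "tetra_image x z y u v \<longleftrightarrow> tetra_image x y z u v"
  "tetra_image (-x) (-y) z u v \<longleftrightarrow> tetra_image x y z u v"
proof -
  have sw01: "tetra_image y x z u v" if h: "tetra_image x y z u v" for x y z
  proof -
    obtain q0 q1 q2 where "tetra q0 q1 q2" "u = x*q0+y*q1+z*q2" "v = y*z*q0 + x*z*q1 + x*y*q2"
      using h unfolding tetra_image_def by blast
    thus ?thesis unfolding tetra_image_def
      by (intro exI[of _ q1] exI[of _ q0] exI[of _ q2]) (auto simp: tetra_def algebra_simps)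
  qed
  have sw12: "tetra_image x z y u v" if h: "tetra_image x y z u v" for x y z
  proof -
    obtain q0 q1 q2 where "tetra q0 q1 q2" "u = x*q0+y*q1+z*q2" "v = y*z*q0 + x*z*q1 + x*y*q2"
      using h unfolding tetra_image_def by blast
    thus ?thesis unfolding tetra_image_def
      by (intro exI[of _ q0] exI[of _ q2] exI[of _ q1]) (auto simp: tetra_def algebra_simps)
  qed
  have fl: "tetra_image (-x) (-y) z u v" if h: "tetra_image x y z u v" for x y z
  proof -
    obtain q0 q1 q2 where "tetra q0 q1 q2" "u = x*q0+y*q1+z*q2" "v = y*z*q0 + x*z*q1 + x*y*q2"
      using h unfolding tetra_image_def by blast
    thus ?thesis unfolding tetra_image_def
      by (intro exI[of _ "-q0"] exI[of _ "-q1"] exI[of _ q2]) (auto simp: tetra_def algebra_simps)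
  qed
  show "tetra_image y x z u v \<longleftrightarrow> tetra_image x y z u v"
    "tetra_image x z y u v \<longleftrightarrow> tetra_image x y z u v"
    using sw01 sw12 by blast+
  show "tetra_image (-x) (-y) z u v \<longleftrightarrow> tetra_image x y z u v"
    using fl[of x y] fl[of "-x" "-y"] by auto
qed

lemma spectral_bounds_symmetries:
  "spectral_bounds y x z l0 l1 l2 \<longleftrightarrow> spectral_bounds x y z l0 l1 l2"
  "spectral_bounds x z y l0 l1 l2 \<longleftrightarrow> spectral_bounds x y z l0 l1 l2"
  "spectral_bounds (-x) (-y) z l0 l1 l2 \<longleftrightarrow> spectral_bounds x y z l0 l1 l2"
  unfolding spectral_bounds_def max3_def by (simp_all add: ac_simps)

lemma tetra_image_iff_spectral_bounds:
  fixes u v :: real and l0 l1 l2 :: complex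
  assumes N: "conj_closed3 l0 l1 l2"
    and e1: "l0+l1+l2 = of_real u" and e2: "l0*l1+l0*l2+l1*l2 = of_real v"
    and e3: "l0*l1*l2 = of_real (x*y*z)"
  shows "tetra_image x y z u v \<longleftrightarrow> spectral_bounds x y z l0 l1 l2"
proof -
  let ?P = "\<lambda>x y z. l0*l1*l2 = of_real (x*y*z)
        \<longrightarrow> (tetra_image x y z u v \<longleftrightarrow> spectral_bounds x y z l0 l1 l2)"
  have "?P x y z"
  proof (rule wlog_sorted[where P = ?P])
    fix a b c :: real assume ab: "a \<ge> b" and bc: "b \<ge> \<bar>c\<bar>"
    have nn: "\<bar>a\<bar> = a" "\<bar>b\<bar> = b" using ab bc by auto
    have M1: "max3 (\<bar>a\<bar>) (\<bar>b\<bar>) (\<bar>c\<bar>) = a" using ab bc unfolding max3_def by simp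
    have M2: "max3 (\<bar>a\<bar>*\<bar>b\<bar>) (\<bar>a\<bar>*\<bar>c\<bar>) (\<bar>b\<bar>*\<bar>c\<bar>) = a*b"
      unfolding nn using max3_products_sorted[OF ab bc abs_ge_zero] .
    show "?P a b c"
      unfolding spectral_bounds_def M1 M2 using tetra_image_iff_bounds_sorted[OF ab bc N e1 e2]
      by (simp add: max3_def)
  next
    fix x y z assume "?P x y z"
    thus "?P y x z"
      unfolding tetra_image_symmetries(1)[where x=x and y=y and z=z]
        spectral_bounds_symmetries(1)[where x=x and y=y and z=z] by (simp add: ac_simps)
  next
    fix x y z assume "?P x y z"
    thus "?P x z y"
      unfolding tetra_image_symmetries(2)[where x=x and y=y and z=z]
        spectral_bounds_symmetries(2)[where x=x and y=y and z=z] by (simp add: ac_simps)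
  next
    fix x y z assume "?P x y z"
    thus "?P (-x) (-y) z"
      unfolding tetra_image_symmetries(3)[where x=x and y=y and z=z]
        spectral_bounds_symmetries(3)[where x=x and y=y and z=z] by simp
  qed
  thus ?thesis using e3 by blast
qed

text \<open>The spectral side of the main theorem in terms of the tetrahedron image: the existence
  of real u, v with the right elementary symmetric functions amounts to the invariance of the
  eigenvalue multiset under conjugation.\<close>

lemma tetra_image_iff_spectral_conditions:
  fixes x y z :: real and l0 l1 l2 :: complex
  shows "(\<exists>u v. of_real u = l0 + l1 + l2 \<and> of_real v = l0*l1 + l0*l2 + l1*l2
            \<and> of_real (x*y*z) = l0*l1*l2 \<and> tetra_image x y z u v)
    \<longleftrightarrow> (image_mset cnj (mset [l0, l1, l2]) = mset [l0, l1, l2]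
            \<and> of_real (x*y*z) = l0*l1*l2 \<and> spectral_bounds x y z l0 l1 l2)"
proof
  assume "\<exists>u v. of_real u = l0 + l1 + l2 \<and> of_real v = l0*l1 + l0*l2 + l1*l2
            \<and> of_real (x*y*z) = l0*l1*l2 \<and> tetra_image x y z u v"
  then obtain u v where e1: "of_real u = l0 + l1 + l2" and e2: "of_real v = l0*l1 + l0*l2 + l1*l2"
    and e3: "of_real (x*y*z) = l0*l1*l2" and R: "tetra_image x y z u v" by blast
  have N: "conj_closed3 l0 l1 l2"
    by (rule real_coefficients_imp_conj_closed3)
       (use arg_cong[OF e1, of Im] arg_cong[OF e2, of Im] arg_cong[OF e3, of Im] in simp_all)
  thus "image_mset cnj (mset [l0, l1, l2]) = mset [l0, l1, l2]
      \<and> of_real (x*y*z) = l0*l1*l2 \<and> spectral_bounds x y z l0 l1 l2"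
    using conj_closed3_imp_conj_invariant tetra_image_iff_spectral_bounds[OF N e1[symmetric] e2[symmetric] e3[symmetric]]
      e3 R by blast
next
  assume h: "image_mset cnj (mset [l0, l1, l2]) = mset [l0, l1, l2]
      \<and> of_real (x*y*z) = l0*l1*l2 \<and> spectral_bounds x y z l0 l1 l2"
  note I = conj_invariant_imp_real_coefficients[OF conjunct1[OF h]]
  have e1: "l0 + l1 + l2 = of_real (Re (l0 + l1 + l2))"
    and e2: "l0*l1 + l0*l2 + l1*l2 = of_real (Re (l0*l1 + l0*l2 + l1*l2))"
    using I by (simp_all add: complex_eq_iff)
  have "tetra_image x y z (Re (l0 + l1 + l2)) (Re (l0*l1 + l0*l2 + l1*l2))"
    using tetra_image_iff_spectral_bounds[OF real_coefficients_imp_conj_closed3[OF I] e1 e2] h by auto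
  thus "\<exists>u v. of_real u = l0 + l1 + l2 \<and> of_real v = l0*l1 + l0*l2 + l1*l2
            \<and> of_real (x*y*z) = l0*l1*l2 \<and> tetra_image x y z u v"
    using e1 e2 h by metis
qed

theorem lemma1:
  fixes l :: "nat \<Rightarrow> complex" and s :: "nat \<Rightarrow> real"
  shows "(\<exists>\<Delta> O1 O2. \<Delta> \<in> carrier_mat 3 3
            \<and> char_poly (map_mat complex_of_real \<Delta>) = (\<Prod>i<3. [:- l i, 1:])
            \<and> O1 \<in> SO3 \<and> O2 \<in> SO3
            \<and> O1 * \<Delta> * O2 = mat_diag 3 s)
     \<longleftrightarrow>
     (image_mset cnj (mset [l 0, l 1, l 2]) = mset [l 0, l 1, l 2]
      \<and> complex_of_real (s 0 * s 1 * s 2) = l 0 * l 1 * l 2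
      \<and> (\<forall>\<sigma> \<tau>. desc_reordering (\<lambda>i. \<bar>s i\<bar>) \<sigma> \<and> desc_reordering (\<lambda>i. cmod (l i)) \<tau> \<longrightarrow>
            \<bar>s (\<sigma> 0) * s (\<sigma> 1)\<bar> \<ge> cmod (l (\<tau> 0) * l (\<tau> 1))
          \<and> \<bar>s (\<sigma> 0)\<bar> \<ge> cmod (l (\<tau> 0))))"
  unfolding decomposition_iff_tetra_image tetra_image_iff_spectral_conditions
    descending_conditions_iff_spectral_bounds ..

end
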